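(* Let ${\mathcal F}$ be an $N_0$-equivariant homological coefficient system of abelian groups on $X_+$ with injective transition maps (i.e. $r^\tau_x:{\mathcal F}(\tau)\to{\mathcal F}(x)$ is injective for all $x\in\tau\in X_+^1$). Suppose that for each $x\in X_+^0$ the map $$H^1\Big(N_0\cap K_x,\bigoplus_{\tau\in\Theta(x)}{\mathcal F}(\tau)\Big)\to H^1(N_0\cap K_x,{\mathcal F}(x))$$ induced by the natural map $\bigoplus_{\tau\in\Theta(x)}{\mathcal F}(\tau)\to{\mathcal F}(x)$ (sum of the $r^\tau_x$) is injective. Then the natural map $C_0(X_+,{\mathcal F})^{N_0}\to H_0(X_+,{\mathcal F})^{N_0}$ is surjective.
   Context: $G={\rm SL}_2({\mathbb Q}_p)$, $X$ its Bruhat–Tits tree, $K_x$ the stabilizer of a vertex $x$. $NT$ is a Borel subgroup of $G$ with unipotent radical $N$ and split maximal torus $T$; $\sigma=\{x_+,x_-\}$ is an edge in the apartment of $T$, labelled so that $N_0:=K_{x_+}\cap N$ fixes $x_-$ (so $N_0\cong{\mathbb Z}_p$). $X_+$ is the maximal connected full subcomplex of $X$ containing $x_+$ but not $x_-$ (a half tree), with vertex set $X_+^0$ and edge set $X_+^1$; $N_0$ acts on $X_+$. For $x\in X_+^0$, $\Theta(x)$ is the set of edges $\tau\in X_+^1$ with $x\in\tau$ which are not fixed by $N_0\cap K_x$ (equivalently, all edges of $X_+$ at $x$ except the one whose other vertex lies on the geodesic from $x_-$ to $x$). An $N_0$-equivariant homological coefficient system on $X_+$ is defined like a $G$-equivariant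 one on $X$ (groups ${\mathcal F}(\tau)$ for simplices of $X_+$, maps $r^\tau_x$, and compatible action maps $g_\tau$ for $g\in N_0$). $C_0(X_+,{\mathcal F})=\bigoplus_{x\in X_+^0}{\mathcal F}(x)$, $C_1(X_+,{\mathcal F})=\bigoplus_{\tau\in X_+^1}{\mathcal F}(\tau)$, and $H_0(X_+,{\mathcal F})$ is the cokernel of the map $C_1\to C_0$ sending $y\in{\mathcal F}(\tau)$ to $\sum_{x\in\tau}r^\tau_x(y)$. Group cohomology is continuous cohomology with discrete coefficients. *)

theory Defs
  imports Main "HOL-Library.Function_Algebras" "HOL-Computational_Algebra.Primes"
begin

text \<open>An element of Z_p is a compatible sequence (a n) with 0 <= a n < p^n and
  a n = a (n+1) mod p^n.  The element g lies in p^n Z_p iff g n = 0.\<close>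

definition zp :: "int \<Rightarrow> (nat \<Rightarrow> int) set" where
  "zp p = {a. \<forall>n. 0 \<le> a n \<and> a n < p ^ n \<and> a n = a (Suc n) mod p ^ n}"

definition zadd :: "int \<Rightarrow> (nat \<Rightarrow> int) \<Rightarrow> (nat \<Rightarrow> int) \<Rightarrow> (nat \<Rightarrow> int)" where
  "zadd p a b = (\<lambda>n. (a n + b n) mod p ^ n)"

definition zneg :: "int \<Rightarrow> (nat \<Rightarrow> int) \<Rightarrow> (nat \<Rightarrow> int)" where
  "zneg p a = (\<lambda>n. (- a n) mod p ^ n)"

definition zzero :: "nat \<Rightarrow> int" where
  "zzero = (\<lambda>n. 0)"

text \<open>Vertices of X_+ at distance n from x_+ are the lattice classes
  [Z_p(a e1 + e2) + p^n (Z_p e1 + Z_p e2)], a in Z/p^n; we encode them as (n, a)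
  with 0 <= a < p^n.  The root (0,0) is x_+.\<close>

type_synonym vertex = "nat \<times> int"
type_synonym edge = "vertex set"

definition verts :: "int \<Rightarrow> vertex set" where
  "verts p = {(n, a). 0 \<le> a \<and> a < p ^ n}"

definition edges :: "int \<Rightarrow> edge set" where
  "edges p = {{(n, a), (Suc n, b)} | n a b.
       (n, a) \<in> verts p \<and> (Suc n, b) \<in> verts p \<and> b mod p ^ n = a}"

definition vact :: "int \<Rightarrow> (nat \<Rightarrow> int) \<Rightarrow> vertex \<Rightarrow> vertex" where
  "vact p g x = (fst x, (snd x + g (fst x)) mod p ^ fst x)"

definition eact :: "int \<Rightarrow> (nat \<Rightarrow> int) \<Rightarrow> edge \<Rightarrow> edge" where
  "eact p g \<tau> = vact p g ` \<tau>"

definition stab :: "int \<Rightarrow> vertex \<Rightarrow> (nat \<Rightarrow> int) set" where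
  "stab p x = {g \<in> zp p. vact p g x = x}"

definition Theta :: "int \<Rightarrow> vertex \<Rightarrow> edge set" where
  "Theta p x = {\<tau> \<in> edges p. x \<in> \<tau> \<and> (\<exists>g \<in> stab p x. eact p g \<tau> \<noteq> \<tau>)}"

text \<open>All groups F(sigma) are realised as subgroups of one ambient abelian group
  of type 'a (no loss of generality).  Fv/Fe give F on vertices/edges, r is the
  family of transition maps r^tau_x, Av/Ae are the action maps g_sigma.\<close>

definition subgrp :: "'a::ab_group_add set \<Rightarrow> bool" where
  "subgrp A \<longleftrightarrow> 0 \<in> A \<and> (\<forall>a\<in>A. \<forall>b\<in>A. a + b \<in> A \<and> - a \<in> A)"

definition additive_on :: "'a::ab_group_add set \<Rightarrow> ('a \<Rightarrow> 'b::ab_group_add) \<Rightarrow> 'b set \<Rightarrow> bool" where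
  "additive_on A f B \<longleftrightarrow> (\<forall>a\<in>A. f a \<in> B) \<and> (\<forall>a\<in>A. \<forall>b\<in>A. f (a + b) = f a + f b)"

definition coeff_sys ::
  "int \<Rightarrow> (vertex \<Rightarrow> 'a::ab_group_add set) \<Rightarrow> (edge \<Rightarrow> 'a set)
   \<Rightarrow> (edge \<Rightarrow> vertex \<Rightarrow> 'a \<Rightarrow> 'a)
   \<Rightarrow> ((nat \<Rightarrow> int) \<Rightarrow> vertex \<Rightarrow> 'a \<Rightarrow> 'a) \<Rightarrow> ((nat \<Rightarrow> int) \<Rightarrow> edge \<Rightarrow> 'a \<Rightarrow> 'a) \<Rightarrow> bool"
where
  "coeff_sys p Fv Fe r Av Ae \<longleftrightarrow>
     (\<forall>x \<in> verts p. subgrp (Fv x)) \<and>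
     (\<forall>\<tau> \<in> edges p. subgrp (Fe \<tau>)) \<and>
     (\<forall>\<tau> \<in> edges p. \<forall>x \<in> \<tau>. additive_on (Fe \<tau>) (r \<tau> x) (Fv x)) \<and>
     (\<forall>g \<in> zp p. \<forall>x \<in> verts p. additive_on (Fv x) (Av g x) (Fv (vact p g x))) \<and>
     (\<forall>g \<in> zp p. \<forall>\<tau> \<in> edges p. additive_on (Fe \<tau>) (Ae g \<tau>) (Fe (eact p g \<tau>))) \<and>
     (\<forall>x \<in> verts p. \<forall>m \<in> Fv x. Av zzero x m = m) \<and>
     (\<forall>\<tau> \<in> edges p. \<forall>m \<in> Fe \<tau>. Ae zzero \<tau> m = m) \<and>
     (\<forall>g \<in> zp p. \<forall>h \<in> zp p. \<forall>x \<in> verts p. \<forall>m \<in> Fv x.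
        Av (zadd p g h) x m = Av g (vact p h x) (Av h x m)) \<and>
     (\<forall>g \<in> zp p. \<forall>h \<in> zp p. \<forall>\<tau> \<in> edges p. \<forall>m \<in> Fe \<tau>.
        Ae (zadd p g h) \<tau> m = Ae g (eact p h \<tau>) (Ae h \<tau> m)) \<and>
     (\<forall>g \<in> zp p. \<forall>\<tau> \<in> edges p. \<forall>x \<in> \<tau>. \<forall>m \<in> Fe \<tau>.
        r (eact p g \<tau>) (vact p g x) (Ae g \<tau> m) = Av g x (r \<tau> x m))"

text \<open>Discreteness of the coefficients: every element of every F(sigma) is fixed
  by an open subgroup p^k Z_p of N_0 (i.e. the action is continuous for the
  discrete topology).\<close>
definition smooth_sys :: "int \<Rightarrow> (vertex \<Rightarrow> 'a::ab_group_add set) \<Rightarrow> (edge \<Rightarrow> 'a set)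
   \<Rightarrow> ((nat \<Rightarrow> int) \<Rightarrow> vertex \<Rightarrow> 'a \<Rightarrow> 'a) \<Rightarrow> ((nat \<Rightarrow> int) \<Rightarrow> edge \<Rightarrow> 'a \<Rightarrow> 'a) \<Rightarrow> bool"
where
  "smooth_sys p Fv Fe Av Ae \<longleftrightarrow>
     (\<forall>x \<in> verts p. \<forall>m \<in> Fv x. \<exists>k. \<forall>g \<in> zp p. g k = 0 \<longrightarrow> Av g x m = m) \<and>
     (\<forall>\<tau> \<in> edges p. \<forall>m \<in> Fe \<tau>. \<exists>k. \<forall>g \<in> zp p. g k = 0 \<longrightarrow> Ae g \<tau> m = m)"

text \<open>Continuous 1-cocycles H -> M (M discrete): crossed homomorphisms that are
  locally constant, i.e. factor through H mod p^k for some k.\<close>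
definition Z1 :: "int \<Rightarrow> (nat \<Rightarrow> int) set \<Rightarrow> 'm::ab_group_add set
    \<Rightarrow> ((nat \<Rightarrow> int) \<Rightarrow> 'm \<Rightarrow> 'm) \<Rightarrow> ((nat \<Rightarrow> int) \<Rightarrow> 'm) set" where
  "Z1 p H M act = {c. (\<forall>g \<in> H. c g \<in> M) \<and>
        (\<forall>g \<in> H. \<forall>h \<in> H. c (zadd p g h) = c g + act g (c h)) \<and>
        (\<exists>k. \<forall>g \<in> H. \<forall>h \<in> H. g k = h k \<longrightarrow> c g = c h)}"

definition cohomologous :: "(nat \<Rightarrow> int) set \<Rightarrow> 'm::ab_group_add set
    \<Rightarrow> ((nat \<Rightarrow> int) \<Rightarrow> 'm \<Rightarrow> 'm) \<Rightarrow> ((nat \<Rightarrow> int) \<Rightarrow> 'm) \<Rightarrow> ((nat \<Rightarrow> int) \<Rightarrow> 'm) \<Rightarrow> bool" where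
  "cohomologous H M act c c' \<longleftrightarrow> (\<exists>m \<in> M. \<forall>g \<in> H. c g - c' g = act g m - m)"

definition H1 :: "int \<Rightarrow> (nat \<Rightarrow> int) set \<Rightarrow> 'm::ab_group_add set
    \<Rightarrow> ((nat \<Rightarrow> int) \<Rightarrow> 'm \<Rightarrow> 'm) \<Rightarrow> ((nat \<Rightarrow> int) \<Rightarrow> 'm) set set" where
  "H1 p H M act = Z1 p H M act //
     {(c, c'). c \<in> Z1 p H M act \<and> c' \<in> Z1 p H M act \<and> cohomologous H M act c c'}"

definition H1_map :: "int \<Rightarrow> (nat \<Rightarrow> int) set \<Rightarrow> 'n::ab_group_add set
    \<Rightarrow> ((nat \<Rightarrow> int) \<Rightarrow> 'n \<Rightarrow> 'n) \<Rightarrow> ('m::ab_group_add \<Rightarrow> 'n)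
    \<Rightarrow> ((nat \<Rightarrow> int) \<Rightarrow> 'm) set \<Rightarrow> ((nat \<Rightarrow> int) \<Rightarrow> 'n) set" where
  "H1_map p H M' act' f C =
     {c'. c' \<in> Z1 p H M' act' \<and> (\<exists>c \<in> C. cohomologous H M' act' (f \<circ> c) c')}"

definition dsum_Theta :: "int \<Rightarrow> (edge \<Rightarrow> 'a::ab_group_add set) \<Rightarrow> vertex \<Rightarrow> (edge \<Rightarrow> 'a) set" where
  "dsum_Theta p Fe x = {y. (\<forall>\<tau> \<in> Theta p x. y \<tau> \<in> Fe \<tau>) \<and> (\<forall>\<tau>. \<tau> \<notin> Theta p x \<longrightarrow> y \<tau> = 0)}"

definition dsum_act :: "int \<Rightarrow> ((nat \<Rightarrow> int) \<Rightarrow> edge \<Rightarrow> 'a::ab_group_add \<Rightarrow> 'a) \<Rightarrow> vertex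
    \<Rightarrow> (nat \<Rightarrow> int) \<Rightarrow> (edge \<Rightarrow> 'a) \<Rightarrow> (edge \<Rightarrow> 'a)" where
  "dsum_act p Ae x g y = (\<lambda>\<tau>. if \<tau> \<in> Theta p x
       then Ae g (eact p (zneg p g) \<tau>) (y (eact p (zneg p g) \<tau>)) else 0)"

definition sum_map :: "int \<Rightarrow> (edge \<Rightarrow> vertex \<Rightarrow> 'a::ab_group_add \<Rightarrow> 'a) \<Rightarrow> vertex
    \<Rightarrow> (edge \<Rightarrow> 'a) \<Rightarrow> 'a" where
  "sum_map p r x y = (\<Sum>\<tau> \<in> Theta p x. r \<tau> x (y \<tau>))"

definition C0 :: "int \<Rightarrow> (vertex \<Rightarrow> 'a::ab_group_add set) \<Rightarrow> (vertex \<Rightarrow> 'a) set" where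
  "C0 p Fv = {c. finite {x. c x \<noteq> 0} \<and> (\<forall>x \<in> verts p. c x \<in> Fv x) \<and> (\<forall>x. x \<notin> verts p \<longrightarrow> c x = 0)}"

definition C1 :: "int \<Rightarrow> (edge \<Rightarrow> 'a::ab_group_add set) \<Rightarrow> (edge \<Rightarrow> 'a) set" where
  "C1 p Fe = {y. finite {\<tau>. y \<tau> \<noteq> 0} \<and> (\<forall>\<tau> \<in> edges p. y \<tau> \<in> Fe \<tau>) \<and> (\<forall>\<tau>. \<tau> \<notin> edges p \<longrightarrow> y \<tau> = 0)}"

definition bdry :: "int \<Rightarrow> (edge \<Rightarrow> vertex \<Rightarrow> 'a::ab_group_add \<Rightarrow> 'a) \<Rightarrow> (edge \<Rightarrow> 'a) \<Rightarrow> (vertex \<Rightarrow> 'a)" where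
  "bdry p r y = (\<lambda>x. \<Sum>\<tau> \<in> {\<tau> \<in> edges p. x \<in> \<tau>}. r \<tau> x (y \<tau>))"

definition chain_act :: "int \<Rightarrow> ((nat \<Rightarrow> int) \<Rightarrow> vertex \<Rightarrow> 'a::ab_group_add \<Rightarrow> 'a)
    \<Rightarrow> (nat \<Rightarrow> int) \<Rightarrow> (vertex \<Rightarrow> 'a) \<Rightarrow> (vertex \<Rightarrow> 'a)" where
  "chain_act p Av g c = (\<lambda>x. if x \<in> verts p
       then Av g (vact p (zneg p g) x) (c (vact p (zneg p g) x)) else 0)"

definition H0_class :: "int \<Rightarrow> (vertex \<Rightarrow> 'a::ab_group_add set) \<Rightarrow> (edge \<Rightarrow> 'a set)
    \<Rightarrow> (edge \<Rightarrow> vertex \<Rightarrow> 'a \<Rightarrow> 'a) \<Rightarrow> (vertex \<Rightarrow> 'a) \<Rightarrow> (vertex \<Rightarrow> 'a) set" where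
  "H0_class p Fv Fe r c = {c + b | b. b \<in> bdry p r ` C1 p Fe}"

definition H0 :: "int \<Rightarrow> (vertex \<Rightarrow> 'a::ab_group_add set) \<Rightarrow> (edge \<Rightarrow> 'a set)
    \<Rightarrow> (edge \<Rightarrow> vertex \<Rightarrow> 'a \<Rightarrow> 'a) \<Rightarrow> (vertex \<Rightarrow> 'a) set set" where
  "H0 p Fv Fe r = H0_class p Fv Fe r ` C0 p Fv"

definition H0_inv :: "int \<Rightarrow> (vertex \<Rightarrow> 'a::ab_group_add set) \<Rightarrow> (edge \<Rightarrow> 'a set)
    \<Rightarrow> (edge \<Rightarrow> vertex \<Rightarrow> 'a \<Rightarrow> 'a) \<Rightarrow> ((nat \<Rightarrow> int) \<Rightarrow> vertex \<Rightarrow> 'a \<Rightarrow> 'a) \<Rightarrow> (vertex \<Rightarrow> 'a) set set" where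
  "H0_inv p Fv Fe r Av = {H0_class p Fv Fe r c | c. c \<in> C0 p Fv \<and>
      (\<forall>g \<in> zp p. H0_class p Fv Fe r (chain_act p Av g c) = H0_class p Fv Fe r c)}"

definition C0_inv :: "int \<Rightarrow> (vertex \<Rightarrow> 'a::ab_group_add set)
    \<Rightarrow> ((nat \<Rightarrow> int) \<Rightarrow> vertex \<Rightarrow> 'a \<Rightarrow> 'a) \<Rightarrow> (vertex \<Rightarrow> 'a) set" where
  "C0_inv p Fv Av = {c \<in> C0 p Fv. \<forall>g \<in> zp p. chain_act p Av g c = c}"

end

theory Submission
  imports Defs
begin

(*
  Let c be a 0-chain whose class in H_0 is N_0-invariant.  Since the boundary map
  \<partial> : C_1 \<rightarrow> C_0 is injective (X_+ is a tree and the r^\<tau>_x are injective), there is a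
  unique 1-chain Y_c(g) with g c = c + \<partial> Y_c(g), and g \<mapsto> Y_c(g) is a continuous 1-cocycle
  of N_0 = Z_p.  We modify c by boundaries, level by level, so that Y_c vanishes on all
  edges below level k.  At the vertex w_k = (k, 0) the restriction of Y_c to \<Theta>(w_k) is a
  cocycle of the stabiliser p^k Z_p whose image in F(w_k) is the coboundary of c(w_k); by
  the hypothesis on H^1 it is itself a coboundary h m - m.  Transporting m to all vertices
  of level k with the translations t_b gives a 1-chain z such that c - \<partial>z has a cocycle
  vanishing up to level k + 1.  Once k exceeds the levels in the support of c, the cocycle
  vanishes identically and c is invariant.
*)

declare split_paired_All [simp del] split_paired_Ex [simp del]

section \<open>Arithmetic of the p-adic integers\<close>

lemma zp_range: "g \<in> zp p \<Longrightarrow> 0 \<le> g n \<and> g n < p ^ n"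
  unfolding zp_def by blast

lemma zp_step: "g \<in> zp p \<Longrightarrow> g (Suc n) mod p ^ n = g n"
  unfolding zp_def by (metis (mono_tags, lifting) mem_Collect_eq)

lemma zp_mod:
  assumes "g \<in> zp p" "n \<le> m"
  shows "g m mod p ^ n = g n"
  using assms(2)
proof (induction m)
  case 0
  then show ?case using zp_range[OF assms(1), of 0] by simp
next
  case (Suc m)
  show ?case
  proof (cases "n = Suc m")
    case True
    then show ?thesis using zp_range[OF assms(1), of n] by simp
  next
    case False
    then have "n \<le> m" using Suc.prems by simp
    have "g (Suc m) mod p ^ n = (g (Suc m) mod p ^ m) mod p ^ n"
      using \<open>n \<le> m\<close> by (simp add: mod_mod_cancel le_imp_power_dvd)
    also have "g (Suc m) mod p ^ m = g m"
      by (rule zp_step[OF assms(1)])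
    finally show ?thesis using Suc.IH[OF \<open>n \<le> m\<close>] by simp
  qed
qed

lemma zp_zero_below: "g \<in> zp p \<Longrightarrow> g m = 0 \<Longrightarrow> n \<le> m \<Longrightarrow> g n = 0"
  using zp_mod[of g p n m] by simp

text \<open>The whole development takes place over the tree attached to an integer p > 1.\<close>

locale half_tree =
  fixes p :: int
  assumes p_gt_1: "1 < p"
begin

lemma pow_pos: "0 < p ^ n"
  using p_gt_1 by simp

lemma zp_of_compatible:
  assumes "\<And>n. f n = f (Suc n) mod p ^ n" and "\<And>n. f n = f n mod p ^ n"
  shows "f \<in> zp p"
  unfolding zp_def mem_Collect_eq
proof (intro allI conjI)
  fix n
  show "0 \<le> f n" "f n < p ^ n"
    using assms(2)[of n] pow_pos[of n] pos_mod_sign[of "p ^ n" "f n"] pos_mod_bound[of "p ^ n" "f n"]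
    by simp_all
  show "f n = f (Suc n) mod p ^ n" by (rule assms(1))
qed

lemma zadd_zp:
  assumes "g \<in> zp p" "h \<in> zp p"
  shows "zadd p g h \<in> zp p"
proof (rule zp_of_compatible)
  fix n
  have "(g (Suc n) + h (Suc n)) mod p ^ Suc n mod p ^ n = (g (Suc n) + h (Suc n)) mod p ^ n"
    by (simp add: mod_mod_cancel)
  also have "\<dots> = (g (Suc n) mod p ^ n + h (Suc n) mod p ^ n) mod p ^ n"
    by (simp add: mod_add_eq)
  also have "\<dots> = (g n + h n) mod p ^ n"
    using zp_mod[OF assms(1), of n "Suc n"] zp_mod[OF assms(2), of n "Suc n"] by simp
  finally show "zadd p g h n = zadd p g h (Suc n) mod p ^ n"
    unfolding zadd_def by (rule sym)
qed (simp add: zadd_def)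

lemma zneg_zp:
  assumes "g \<in> zp p"
  shows "zneg p g \<in> zp p"
proof (rule zp_of_compatible)
  fix n
  have "(- g (Suc n)) mod p ^ Suc n mod p ^ n = (- (g (Suc n) mod p ^ n)) mod p ^ n"
    by (simp add: mod_mod_cancel mod_minus_eq)
  also have "\<dots> = (- g n) mod p ^ n"
    using zp_mod[OF assms, of n "Suc n"] by simp
  finally show "zneg p g n = zneg p g (Suc n) mod p ^ n"
    unfolding zneg_def by (rule sym)
qed (simp add: zneg_def)

definition translation :: "int \<Rightarrow> nat \<Rightarrow> int" where
  "translation b = (\<lambda>n. b mod p ^ n)"

lemma translation_zp: "translation b \<in> zp p"
  by (rule zp_of_compatible) (simp_all add: translation_def mod_mod_cancel)

lemma zadd_comm: "zadd p g h = zadd p h g"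
  by (simp add: zadd_def add.commute)

lemma zadd_assoc: "zadd p (zadd p g h) k = zadd p g (zadd p h k)"
  by (rule ext) (simp add: zadd_def mod_add_left_eq mod_add_right_eq add.assoc)

lemma zadd_zero: "g \<in> zp p \<Longrightarrow> zadd p g zzero = g"
  by (rule ext) (simp add: zadd_def zzero_def zp_range mod_pos_pos_trivial)

lemma zadd_neg: "zadd p g (zneg p g) = zzero"
  by (rule ext) (simp add: zadd_def zneg_def zzero_def mod_add_right_eq)

lemma zadd_cancel:
  assumes "h \<in> zp p"
  shows "zadd p g (zadd p (zneg p g) h) = h"
  using zadd_assoc[of g "zneg p g" h] zadd_neg[of g] zadd_comm[of zzero h] zadd_zero[OF assms]
  by simp

lemma fst_vact [simp]: "fst (vact p g x) = fst x"
  by (simp add: vact_def)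

lemma vact_verts: "vact p g x \<in> verts p"
  by (cases x) (simp add: vact_def verts_def pow_pos)

lemma vact_zero: "x \<in> verts p \<Longrightarrow> vact p zzero x = x"
  by (cases x) (simp add: vact_def verts_def zzero_def mod_pos_pos_trivial)

lemma vact_add: "vact p (zadd p g h) x = vact p g (vact p h x)"
  by (cases x) (simp add: vact_def zadd_def mod_add_left_eq mod_add_right_eq algebra_simps)

lemma vact_neg: "x \<in> verts p \<Longrightarrow> vact p g (vact p (zneg p g) x) = x"
  using vact_add[of g "zneg p g" x] vact_zero[of x] by (simp add: zadd_neg)

lemma vact_neg2: "x \<in> verts p \<Longrightarrow> vact p (zneg p g) (vact p g x) = x"
  using vact_add[of "zneg p g" g x] vact_zero[of x] by (simp add: zadd_neg zadd_comm)

lemma vact_cong: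
  assumes "g (fst x) mod p ^ fst x = h (fst x) mod p ^ fst x"
  shows "vact p g x = vact p h x"
proof (cases x)
  case (Pair n a)
  then have "(a + g n) mod p ^ n = (a + h n) mod p ^ n"
    using assms by (metis fst_conv mod_add_right_eq)
  then show ?thesis using Pair by (simp add: vact_def)
qed

lemma vact_neg_add: "vact p (zneg p (zadd p g h)) x = vact p (zneg p h) (vact p (zneg p g) x)"
proof -
  have "zneg p (zadd p g h) n mod p ^ n = zadd p (zneg p h) (zneg p g) n mod p ^ n" for n
  proof -
    have "zneg p (zadd p g h) n = (- ((g n + h n) mod p ^ n)) mod p ^ n"
      by (simp add: zneg_def zadd_def)
    also have "\<dots> = (- (g n + h n)) mod p ^ n" by (rule mod_minus_eq)
    also have "\<dots> = ((- h n) + (- g n)) mod p ^ n" by (simp add: algebra_simps)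
    also have "\<dots> = ((- h n) mod p ^ n + (- g n) mod p ^ n) mod p ^ n" by (rule mod_add_eq[symmetric])
    also have "\<dots> = zadd p (zneg p h) (zneg p g) n" by (simp add: zneg_def zadd_def)
    finally show ?thesis by simp
  qed
  then have "vact p (zneg p (zadd p g h)) x = vact p (zadd p (zneg p h) (zneg p g)) x"
    by (rule vact_cong)
  also have "\<dots> = vact p (zneg p h) (vact p (zneg p g) x)"
    by (rule vact_add)
  finally show ?thesis .
qed

lemma vact_fix_iff:
  assumes "x \<in> verts p" "g \<in> zp p"
  shows "vact p g x = x \<longleftrightarrow> g (fst x) = 0"
proof -
  obtain n a where x: "x = (n, a)" and a: "0 \<le> a" "a < p ^ n"
    using assms(1) by (cases x) (auto simp: verts_def)
  have g: "0 \<le> g n" "g n < p ^ n" using zp_range[OF assms(2)] by auto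
  have "vact p g x = x \<longleftrightarrow> (a + g n) mod p ^ n = a mod p ^ n"
    using a by (simp add: x vact_def mod_pos_pos_trivial)
  also have "\<dots> \<longleftrightarrow> p ^ n dvd g n"
    by (simp add: mod_eq_dvd_iff)
  also have "\<dots> \<longleftrightarrow> g n = 0"
    using g zdvd_not_zless[of "g n" "p ^ n"] by (cases "g n = 0") auto
  finally show ?thesis by (simp add: x)
qed

lemma stab_iff: "x \<in> verts p \<Longrightarrow> g \<in> stab p x \<longleftrightarrow> g \<in> zp p \<and> g (fst x) = 0"
  using vact_fix_iff unfolding stab_def by blast

lemma base_vertex: "(k, 0) \<in> verts p"
  using pow_pos[of k] by (simp add: verts_def)

lemma vact_translation: "vact p (translation b) (k, 0) = (k, b mod p ^ k)"
  by (simp add: vact_def translation_def)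

end

section \<open>Edges of the half tree\<close>

definition ed :: "int \<Rightarrow> nat \<Rightarrow> int \<Rightarrow> edge" where
  "ed p n b = {(n, b mod p ^ n), (Suc n, b)}"

lemma ed_inj: "ed p n b = ed p n' b' \<Longrightarrow> n = n' \<and> b = b'"
  unfolding ed_def by (auto simp: doubleton_eq_iff)

lemma ed_level: "x \<in> ed p n b \<Longrightarrow> fst x = n \<or> fst x = Suc n"
  unfolding ed_def by auto

lemma ed_min_level: "Min (fst ` ed p n b) = n"
  by (simp add: ed_def)

lemma ed_lower_vertex: "(k, a) \<in> ed p k b \<longleftrightarrow> b mod p ^ k = a"
  by (auto simp: ed_def)

lemma ed_lower_vertex_unique: "x \<in> ed p k b \<Longrightarrow> fst x = k \<Longrightarrow> x = (k, b mod p ^ k)"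
  unfolding ed_def by (cases x) auto

context half_tree
begin

lemma edges_ed: "\<tau> \<in> edges p \<longleftrightarrow> (\<exists>n b. 0 \<le> b \<and> b < p ^ Suc n \<and> \<tau> = ed p n b)"
proof
  assume "\<tau> \<in> edges p"
  then obtain n a b where "\<tau> = {(n, a), (Suc n, b)}" "(Suc n, b) \<in> verts p" "b mod p ^ n = a"
    unfolding edges_def by blast
  then show "\<exists>n b. 0 \<le> b \<and> b < p ^ Suc n \<and> \<tau> = ed p n b"
    by (auto simp: verts_def ed_def simp del: power_Suc)
next
  assume "\<exists>n b. 0 \<le> b \<and> b < p ^ Suc n \<and> \<tau> = ed p n b"
  then obtain n b where nb: "0 \<le> b" "b < p ^ Suc n" "\<tau> = ed p n b" by blast
  have "(n, b mod p ^ n) \<in> verts p" using pow_pos[of n] by (simp add: verts_def)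
  moreover have "(Suc n, b) \<in> verts p" using nb by (simp add: verts_def)
  ultimately show "\<tau> \<in> edges p" unfolding edges_def ed_def nb(3) by blast
qed

lemma ed_edge: "0 \<le> b \<Longrightarrow> b < p ^ Suc n \<Longrightarrow> ed p n b \<in> edges p"
  using edges_ed by blast

lemma ed_edge_range: "ed p k b \<in> edges p \<Longrightarrow> 0 \<le> b \<and> b < p ^ Suc k"
  using edges_ed ed_inj by metis

lemma edges_sub_verts: "\<tau> \<in> edges p \<Longrightarrow> x \<in> \<tau> \<Longrightarrow> x \<in> verts p"
  unfolding edges_def by auto

lemma edge_finite: "\<tau> \<in> edges p \<Longrightarrow> finite \<tau>"
  using edges_ed by (auto simp: ed_def)

lemma eact_ed:
  assumes "g \<in> zp p"
  shows "eact p g (ed p n b) = ed p n ((b + g (Suc n)) mod p ^ Suc n)"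
proof -
  have "((b + g (Suc n)) mod p ^ Suc n) mod p ^ n = (b + g (Suc n)) mod p ^ n"
    by (rule mod_mod_cancel) (simp add: le_imp_power_dvd del: power_Suc)
  also have "\<dots> = (b + g (Suc n) mod p ^ n) mod p ^ n" by (simp add: mod_add_right_eq)
  also have "\<dots> = (b mod p ^ n + g n) mod p ^ n"
    using zp_mod[OF assms, of n "Suc n"] by (simp add: mod_add_left_eq)
  finally have "(b mod p ^ n + g n) mod p ^ n = ((b + g (Suc n)) mod p ^ Suc n) mod p ^ n" by simp
  then show ?thesis unfolding eact_def ed_def by (simp add: vact_def del: power_Suc)
qed

lemma eact_edges:
  assumes "g \<in> zp p" "\<tau> \<in> edges p"
  shows "eact p g \<tau> \<in> edges p"
proof -
  obtain n b where "\<tau> = ed p n b" using assms(2) edges_ed by blast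
  then show ?thesis using eact_ed[OF assms(1)] ed_edge pow_pos[of "Suc n"]
    by (simp del: power_Suc)
qed

lemma eact_mem: "x \<in> \<tau> \<Longrightarrow> vact p g x \<in> eact p g \<tau>"
  unfolding eact_def by simp

lemma eact_neg: "\<tau> \<in> edges p \<Longrightarrow> eact p g (eact p (zneg p g) \<tau>) = \<tau>"
  unfolding eact_def using vact_neg edges_sub_verts by (simp add: image_image cong: image_cong)

lemma eact_neg2: "\<tau> \<in> edges p \<Longrightarrow> eact p (zneg p g) (eact p g \<tau>) = \<tau>"
  unfolding eact_def using vact_neg2 edges_sub_verts by (simp add: image_image cong: image_cong)

lemma eact_inj: "\<tau> \<in> edges p \<Longrightarrow> \<sigma> \<in> edges p \<Longrightarrow> eact p g \<tau> = eact p g \<sigma> \<Longrightarrow> \<tau> = \<sigma>"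
  by (metis eact_neg2)

lemma eact_neg_add: "eact p (zneg p (zadd p g h)) \<tau> = eact p (zneg p h) (eact p (zneg p g) \<tau>)"
  unfolding eact_def by (simp add: image_image vact_neg_add)

abbreviation edges_at :: "vertex \<Rightarrow> edge set" where
  "edges_at x \<equiv> {\<tau> \<in> edges p. x \<in> \<tau>}"

lemma edges_at_outside: "x \<notin> verts p \<Longrightarrow> edges_at x = {}"
  using edges_sub_verts by blast

lemma edges_at_bij:
  assumes g: "g \<in> zp p" and x: "x \<in> verts p"
  shows "bij_betw (eact p g) (edges_at (vact p (zneg p g) x)) (edges_at x)"
proof -
  have g': "zneg p g \<in> zp p" by (rule zneg_zp[OF g])
  have "inj_on (eact p g) (edges_at (vact p (zneg p g) x))"
    by (rule inj_onI) (auto dest: eact_inj)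
  moreover have "eact p g ` edges_at (vact p (zneg p g) x) = edges_at x"
  proof
    show "eact p g ` edges_at (vact p (zneg p g) x) \<subseteq> edges_at x"
    proof
      fix \<sigma> assume "\<sigma> \<in> eact p g ` edges_at (vact p (zneg p g) x)"
      then obtain \<tau> where t: "\<tau> \<in> edges p" "vact p (zneg p g) x \<in> \<tau>" "\<sigma> = eact p g \<tau>"
        by blast
      have "vact p g (vact p (zneg p g) x) \<in> eact p g \<tau>" by (rule eact_mem[OF t(2)])
      then show "\<sigma> \<in> edges_at x" using t eact_edges[OF g] vact_neg[OF x] by simp
    qed
    show "edges_at x \<subseteq> eact p g ` edges_at (vact p (zneg p g) x)"
    proof
      fix \<sigma> assume s: "\<sigma> \<in> edges_at x"
      have "eact p (zneg p g) \<sigma> \<in> edges_at (vact p (zneg p g) x)"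
        using s eact_edges[OF g'] eact_mem by blast
      moreover have "\<sigma> = eact p g (eact p (zneg p g) \<sigma>)" using s eact_neg by simp
      ultimately show "\<sigma> \<in> eact p g ` edges_at (vact p (zneg p g) x)" by blast
    qed
  qed
  ultimately show ?thesis by (simp add: bij_betw_def)
qed

lemma finite_edges_upto: "finite {\<tau> \<in> edges p. \<forall>x \<in> \<tau>. fst x \<le> M}"
proof -
  have "{x \<in> verts p. fst x \<le> M} \<subseteq> {0..M} \<times> {0..<p ^ M}"
  proof
    fix x assume "x \<in> {x \<in> verts p. fst x \<le> M}"
    then obtain n a where x: "x = (n, a)" "0 \<le> a" "a < p ^ n" "n \<le> M"
      by (auto simp: verts_def)
    have "p ^ n \<le> p ^ M" using x(4) p_gt_1 by (simp add: power_increasing)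
    then show "x \<in> {0..M} \<times> {0..<p ^ M}" using x by auto
  qed
  then have "finite (Pow {x \<in> verts p. fst x \<le> M})"
    using finite_subset by blast
  moreover have "{\<tau> \<in> edges p. \<forall>x \<in> \<tau>. fst x \<le> M} \<subseteq> Pow {x \<in> verts p. fst x \<le> M}"
    using edges_sub_verts by blast
  ultimately show ?thesis using finite_subset by blast
qed

lemma finite_edges_at: "finite (edges_at x)"
proof -
  have "edges_at x \<subseteq> {\<tau> \<in> edges p. \<forall>y \<in> \<tau>. fst y \<le> Suc (fst x)}"
  proof safe
    fix \<tau> y assume "\<tau> \<in> edges p" "x \<in> \<tau>" "y \<in> \<tau>"
    then obtain n b where "\<tau> = ed p n b" using edges_ed by blast
    then show "fst y \<le> Suc (fst x)"
      using ed_level[of x p n b] ed_level[of y p n b] \<open>x \<in> \<tau>\<close> \<open>y \<in> \<tau>\<close> by auto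
  qed
  then show ?thesis using finite_edges_upto by (rule finite_subset)
qed

end

context half_tree
begin

lemma translation_moves:
  assumes "0 \<le> b" "b < p ^ Suc k"
  shows "eact p (translation (p ^ k)) (ed p k b) \<noteq> ed p k b"
proof
  assume fixed: "eact p (translation (p ^ k)) (ed p k b) = ed p k b"
  have "p ^ k < p ^ Suc k" using p_gt_1 pow_pos[of k] by simp
  then have "translation (p ^ k) (Suc k) = p ^ k"
    unfolding translation_def using pow_pos[of k] by (simp add: mod_pos_pos_trivial del: power_Suc)
  then have "ed p k ((b + p ^ k) mod p ^ Suc k) = ed p k b"
    using fixed eact_ed[OF translation_zp] by (simp del: power_Suc)
  then have "(b + p ^ k) mod p ^ Suc k = b mod p ^ Suc k"
    using assms ed_inj by (simp add: mod_pos_pos_trivial del: power_Suc)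
  then have "p ^ Suc k dvd p ^ k"
    using mod_eq_dvd_iff[of "b + p ^ k" "p ^ Suc k" b] by simp
  then have "p ^ Suc k \<le> p ^ k" using pow_pos[of k] by (rule zdvd_imp_le)
  then show False using p_gt_1 pow_pos[of k] by simp
qed

text \<open>\<Theta>(k, a) consists of the edges from (k, a) to its p children at level k + 1;
  the edge to the parent is fixed by the stabiliser p^k Z_p.\<close>
lemma Theta_iff:
  assumes x: "(k, a) \<in> verts p"
  shows "\<tau> \<in> Theta p (k, a) \<longleftrightarrow> (\<exists>b. 0 \<le> b \<and> b < p ^ Suc k \<and> b mod p ^ k = a \<and> \<tau> = ed p k b)"
proof
  assume t: "\<tau> \<in> Theta p (k, a)"
  then have te: "\<tau> \<in> edges p" and xt: "(k, a) \<in> \<tau>"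
    and moved: "\<exists>g \<in> stab p (k, a). eact p g \<tau> \<noteq> \<tau>"
    unfolding Theta_def by auto
  obtain n b where nb: "0 \<le> b" "b < p ^ Suc n" "\<tau> = ed p n b" using te edges_ed by blast
  from xt nb(3) have "(n = k \<and> b mod p ^ n = a) \<or> (k = Suc n \<and> b = a)" by (auto simp: ed_def)
  then show "\<exists>b. 0 \<le> b \<and> b < p ^ Suc k \<and> b mod p ^ k = a \<and> \<tau> = ed p k b"
  proof
    assume "n = k \<and> b mod p ^ n = a" then show ?thesis using nb by blast
  next
    assume kn: "k = Suc n \<and> b = a"
    obtain g where g: "g \<in> stab p (k, a)" "eact p g \<tau> \<noteq> \<tau>" using moved by blast
    have gz: "g \<in> zp p" "g k = 0" using g(1) stab_iff[OF x] by auto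
    have "eact p g \<tau> = ed p n ((b + g (Suc n)) mod p ^ Suc n)" using nb(3) eact_ed[OF gz(1)] by simp
    also have "(b + g (Suc n)) mod p ^ Suc n = b"
      using kn gz(2) nb by (simp add: mod_pos_pos_trivial del: power_Suc)
    finally show ?thesis using g(2) nb(3) by simp
  qed
next
  assume "\<exists>b. 0 \<le> b \<and> b < p ^ Suc k \<and> b mod p ^ k = a \<and> \<tau> = ed p k b"
  then obtain b where b: "0 \<le> b" "b < p ^ Suc k" "b mod p ^ k = a" "\<tau> = ed p k b" by blast
  have "translation (p ^ k) \<in> stab p (k, a)"
    using stab_iff[OF x] translation_zp by (simp add: translation_def)
  then show "\<tau> \<in> Theta p (k, a)"
    unfolding Theta_def using ed_edge[OF b(1,2)] b(3,4) ed_lower_vertex translation_moves[OF b(1,2)]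
    by blast
qed

lemma Theta_edges: "\<tau> \<in> Theta p x \<Longrightarrow> \<tau> \<in> edges_at x"
  unfolding Theta_def by blast

lemma Theta_finite: "finite (Theta p x)"
  using finite_subset[OF _ finite_edges_at[of x]] Theta_edges by blast

lemma Theta_act:
  assumes x: "(k, a) \<in> verts p" and g: "g \<in> zp p" "g k = 0" and t: "\<tau> \<in> Theta p (k, a)"
  shows "eact p g \<tau> \<in> Theta p (k, a)"
proof -
  obtain b where b: "0 \<le> b" "b < p ^ Suc k" "b mod p ^ k = a" "\<tau> = ed p k b"
    using t Theta_iff[OF x] by blast
  define b' where "b' = (b + g (Suc k)) mod p ^ Suc k"
  have e: "eact p g \<tau> = ed p k b'" unfolding b'_def using b(4) eact_ed[OF g(1)] by simp
  have "b' mod p ^ k = (b + g (Suc k)) mod p ^ k" unfolding b'_def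
    by (rule mod_mod_cancel) (simp add: le_imp_power_dvd del: power_Suc)
  also have "\<dots> = (b + g (Suc k) mod p ^ k) mod p ^ k" by (rule mod_add_right_eq[symmetric])
  also have "g (Suc k) mod p ^ k = 0" using zp_mod[OF g(1), of k "Suc k"] g(2) by simp
  finally have "b' mod p ^ k = a" using b(3) by simp
  moreover have "0 \<le> b'" "b' < p ^ Suc k" unfolding b'_def using pow_pos[of "Suc k"] by (simp_all del: power_Suc)
  ultimately show ?thesis using e Theta_iff[OF x] by blast
qed

lemma Theta_act_neg:
  assumes x: "(k, a) \<in> verts p" and g: "g \<in> zp p" "g k = 0" and t: "\<tau> \<in> Theta p (k, a)"
  shows "eact p (zneg p g) \<tau> \<in> Theta p (k, a)"
  using Theta_act[OF x zneg_zp[OF g(1)] _ t] g(2) by (simp add: zneg_def)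

lemma Theta_bij:
  assumes x: "(k, a) \<in> verts p" and g: "g \<in> zp p" "g k = 0"
  shows "bij_betw (eact p g) (Theta p (k, a)) (Theta p (k, a))"
proof -
  have "inj_on (eact p g) (Theta p (k, a))"
    by (rule inj_onI) (use eact_inj Theta_edges in blast)
  moreover have "eact p g ` Theta p (k, a) = Theta p (k, a)"
  proof
    show "eact p g ` Theta p (k, a) \<subseteq> Theta p (k, a)" using Theta_act[OF x g] by blast
    show "Theta p (k, a) \<subseteq> eact p g ` Theta p (k, a)"
    proof
      fix \<sigma> assume s: "\<sigma> \<in> Theta p (k, a)"
      have "eact p (zneg p g) \<sigma> \<in> Theta p (k, a)" by (rule Theta_act_neg[OF x g s])
      moreover have "\<sigma> = eact p g (eact p (zneg p g) \<sigma>)" using eact_neg Theta_edges[OF s] by simp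
      ultimately show "\<sigma> \<in> eact p g ` Theta p (k, a)" by blast
    qed
  qed
  ultimately show ?thesis by (simp add: bij_betw_def)
qed

lemma translation_back_Theta:
  assumes te: "ed p k b \<in> edges p"
  shows "eact p (zneg p (translation b)) (ed p k b) \<in> Theta p (k, 0)"
proof -
  define \<rho> where "\<rho> = eact p (zneg p (translation b)) (ed p k b)"
  have nt: "zneg p (translation b) \<in> zp p" by (rule zneg_zp[OF translation_zp])
  obtain b0 where b0: "\<rho> = ed p k b0"
    using eact_ed[OF nt] unfolding \<rho>_def by blast
  have "vact p (zneg p (translation b)) (k, b mod p ^ k) = (k, 0)"
    using vact_neg2[OF base_vertex, of "translation b" k] vact_translation[of b k] by simp
  then have "(k, 0) \<in> \<rho>"
    unfolding \<rho>_def using eact_mem[of "(k, b mod p ^ k)" "ed p k b" "zneg p (translation b)"]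
    by (simp add: ed_lower_vertex)
  then have low: "b0 mod p ^ k = 0" using b0 by (simp add: ed_lower_vertex)
  have "\<rho> \<in> edges p" unfolding \<rho>_def by (rule eact_edges[OF nt te])
  then have "ed p k b0 \<in> edges p" using b0 by simp
  then have "0 \<le> b0 \<and> b0 < p ^ Suc k" by (rule ed_edge_range)
  then have "\<exists>b. 0 \<le> b \<and> b < p ^ Suc k \<and> b mod p ^ k = 0 \<and> \<rho> = ed p k b"
    using low b0 by (intro exI[of _ b0]) simp
  then show ?thesis unfolding \<rho>_def by (rule iffD2[OF Theta_iff[OF base_vertex]])
qed

lemma translation_conj_stab:
  assumes g: "g \<in> zp p" and moves: "eact p g (ed p k b') = ed p k b"
  shows "zadd p (zneg p (translation b)) (zadd p g (translation b')) \<in> stab p (k, 0)"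
proof -
  have "vact p g (k, b' mod p ^ k) \<in> ed p k b"
    using eact_mem[of "(k, b' mod p ^ k)" "ed p k b'" g] moves by (simp add: ed_lower_vertex)
  then have gb: "vact p g (k, b' mod p ^ k) = (k, b mod p ^ k)"
    by (rule ed_lower_vertex_unique) simp
  have "vact p (zadd p (zneg p (translation b)) (zadd p g (translation b'))) (k, 0)
      = vact p (zneg p (translation b)) (vact p g (vact p (translation b') (k, 0)))"
    by (simp add: vact_add)
  also have "\<dots> = (k, 0)"
    using gb vact_neg2[OF base_vertex, of "translation b" k] by (simp add: vact_translation)
  finally show ?thesis
    unfolding stab_def using zadd_zp zneg_zp translation_zp g by blast
qed

lemma edges_at_base_not_Theta:
  assumes t: "ed p n b \<in> edges_at (k, 0)" "ed p n b \<notin> Theta p (k, 0)"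
  shows "n < k"
proof (rule ccontr)
  assume "\<not> n < k"
  moreover have "k = n \<or> k = Suc n" using ed_level[of "(k, 0)" p n b] t(1) by simp
  ultimately have nk: "n = k" by linarith
  then have "b mod p ^ k = 0" using t(1) ed_lower_vertex[of k 0 p b] by simp
  moreover have "0 \<le> b \<and> b < p ^ Suc k" using t(1) nk by (intro ed_edge_range) simp
  ultimately have "ed p k b \<in> Theta p (k, 0)"
    by (intro iffD2[OF Theta_iff[OF base_vertex]] exI[of _ b]) simp
  then show False using t(2) nk by simp
qed

end

lemma sg_zero: "subgrp A \<Longrightarrow> 0 \<in> A" by (simp add: subgrp_def)
lemma sg_add: "subgrp A \<Longrightarrow> a \<in> A \<Longrightarrow> b \<in> A \<Longrightarrow> a + b \<in> A" by (simp add: subgrp_def)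
lemma sg_neg: "subgrp A \<Longrightarrow> a \<in> A \<Longrightarrow> - a \<in> A" by (simp add: subgrp_def)

lemma sg_diff: "subgrp A \<Longrightarrow> a \<in> A \<Longrightarrow> b \<in> A \<Longrightarrow> a - b \<in> A"
  using sg_add[of A a "- b"] sg_neg[of A b] by simp

lemma sg_sum: "subgrp A \<Longrightarrow> \<forall>i\<in>S. u i \<in> A \<Longrightarrow> sum u S \<in> A"
  by (induction S rule: infinite_finite_induct) (auto simp: sg_zero sg_add)

lemma ad_mem: "additive_on A f B \<Longrightarrow> a \<in> A \<Longrightarrow> f a \<in> B"
  by (simp add: additive_on_def)

lemma ad_add: "additive_on A f B \<Longrightarrow> a \<in> A \<Longrightarrow> b \<in> A \<Longrightarrow> f (a + b) = f a + f b"
  by (simp add: additive_on_def)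

lemma ad_zero:
  assumes "subgrp A" "additive_on A f B"
  shows "f 0 = 0"
  using ad_add[OF assms(2), of 0 0] sg_zero[OF assms(1)] by simp

lemma ad_neg:
  assumes "subgrp A" "additive_on A f B" "a \<in> A"
  shows "f (- a) = - f a"
  using ad_add[OF assms(2) assms(3) sg_neg[OF assms(1,3)]] ad_zero[OF assms(1,2)]
  by (simp add: eq_neg_iff_add_eq_0 add.commute)

lemma ad_diff:
  assumes "subgrp A" "additive_on A f B" "a \<in> A" "b \<in> A"
  shows "f (a - b) = f a - f b"
  using ad_add[OF assms(2) assms(3) sg_neg[OF assms(1,4)]] ad_neg[OF assms(1,2,4)] by simp

lemma ad_sum:
  assumes "subgrp A" "additive_on A f B" "\<forall>i\<in>S. u i \<in> A"
  shows "f (sum u S) = (\<Sum>i\<in>S. f (u i))"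
  using assms(3)
proof (induction S rule: infinite_finite_induct)
  case (insert x F)
  then show ?case using ad_add[OF assms(2)] sg_sum[OF assms(1), of F u] by simp
qed (simp_all add: ad_zero[OF assms(1,2)])

section \<open>A criterion for a 1-cocycle to be a coboundary\<close>

definition cohom_rel :: "int \<Rightarrow> (nat \<Rightarrow> int) set \<Rightarrow> 'm::ab_group_add set
    \<Rightarrow> ((nat \<Rightarrow> int) \<Rightarrow> 'm \<Rightarrow> 'm) \<Rightarrow> (((nat \<Rightarrow> int) \<Rightarrow> 'm) \<times> ((nat \<Rightarrow> int) \<Rightarrow> 'm)) set" where
  "cohom_rel p H M act = {(c, c'). c \<in> Z1 p H M act \<and> c' \<in> Z1 p H M act \<and> cohomologous H M act c c'}"

definition coboundaries :: "int \<Rightarrow> (nat \<Rightarrow> int) set \<Rightarrow> 'm::ab_group_add set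
    \<Rightarrow> ((nat \<Rightarrow> int) \<Rightarrow> 'm \<Rightarrow> 'm) \<Rightarrow> ((nat \<Rightarrow> int) \<Rightarrow> 'm) set" where
  "coboundaries p H M act = {c \<in> Z1 p H M act. \<exists>m\<in>M. \<forall>g\<in>H. c g = act g m - m}"

locale equivariant_hom =
  fixes H :: "(nat \<Rightarrow> int) set"
    and M :: "'m::ab_group_add set" and act :: "(nat \<Rightarrow> int) \<Rightarrow> 'm \<Rightarrow> 'm"
    and N :: "'n::ab_group_add set" and actN :: "(nat \<Rightarrow> int) \<Rightarrow> 'n \<Rightarrow> 'n"
    and f :: "'m \<Rightarrow> 'n"
  assumes sM: "subgrp M" and sN: "subgrp N"
    and aM: "\<And>g. g \<in> H \<Longrightarrow> additive_on M (act g) M"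
    and aN: "\<And>g. g \<in> H \<Longrightarrow> additive_on N (actN g) N"
    and af: "additive_on M f N"
    and eqv: "\<And>g m. g \<in> H \<Longrightarrow> m \<in> M \<Longrightarrow> f (act g m) = actN g (f m)"
begin

lemma cohom_rel_refl: "c \<in> Z1 p H M act \<Longrightarrow> c \<in> cohom_rel p H M act `` {c}"
  unfolding cohom_rel_def cohomologous_def using sg_zero[OF sM] ad_zero[OF sM aM] by fastforce

lemma H1_map_trivial:
  assumes Y: "Y \<in> Z1 p H M act" and n: "n \<in> N" and fY: "\<And>g. g \<in> H \<Longrightarrow> f (Y g) = actN g n - n"
  shows "H1_map p H N actN f (cohom_rel p H M act `` {Y}) = coboundaries p H N actN"
proof
  show "H1_map p H N actN f (cohom_rel p H M act `` {Y}) \<subseteq> coboundaries p H N actN"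
  proof
    fix c' assume "c' \<in> H1_map p H N actN f (cohom_rel p H M act `` {Y})"
    then obtain Y' where c': "c' \<in> Z1 p H N actN" and Y': "Y' \<in> cohom_rel p H M act `` {Y}"
      and coh: "cohomologous H N actN (f \<circ> Y') c'" unfolding H1_map_def by blast
    from Y' obtain m where m: "m \<in> M" "\<forall>g\<in>H. Y g - Y' g = act g m - m" and Y'Z: "Y' \<in> Z1 p H M act"
      unfolding cohom_rel_def cohomologous_def by blast
    from coh obtain n2 where n2: "n2 \<in> N" "\<forall>g\<in>H. f (Y' g) - c' g = actN g n2 - n2"
      unfolding cohomologous_def by auto
    have fm: "f m \<in> N" by (rule ad_mem[OF af m(1)])
    have "c' g = actN g (n - f m - n2) - (n - f m - n2)" if g: "g \<in> H" for g
    proof -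
      have YM: "Y g \<in> M" "Y' g \<in> M" using Y Y'Z g unfolding Z1_def by blast+
      have "f (Y g) - f (Y' g) = f (act g m) - f m"
        using m g ad_diff[OF sM af YM] ad_diff[OF sM af ad_mem[OF aM[OF g] m(1)] m(1)] by simp
      then have fY': "f (Y' g) = actN g n - n - (actN g (f m) - f m)"
        using fY[OF g] eqv[OF g m(1)] by (simp add: algebra_simps)
      have act_n: "actN g (n - f m - n2) = actN g n - actN g (f m) - actN g n2"
        using ad_diff[OF sN aN[OF g] sg_diff[OF sN n fm] n2(1)] ad_diff[OF sN aN[OF g] n fm] by simp
      have "c' g = f (Y' g) - (actN g n2 - n2)" using n2(2) g by (simp add: algebra_simps)
      then show ?thesis unfolding act_n fY' by (simp add: algebra_simps)
    qed
    then show "c' \<in> coboundaries p H N actN"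
      unfolding coboundaries_def using c' sg_diff[OF sN sg_diff[OF sN n fm] n2(1)] by blast
  qed
next
  show "coboundaries p H N actN \<subseteq> H1_map p H N actN f (cohom_rel p H M act `` {Y})"
  proof
    fix c' assume "c' \<in> coboundaries p H N actN"
    then obtain n' where c': "c' \<in> Z1 p H N actN" and n': "n' \<in> N" "\<forall>g\<in>H. c' g = actN g n' - n'"
      unfolding coboundaries_def by blast
    have "cohomologous H N actN (f \<circ> Y) c'"
      unfolding cohomologous_def
    proof (intro bexI ballI)
      fix g assume g: "g \<in> H"
      have "actN g (n - n') = actN g n - actN g n'" by (rule ad_diff[OF sN aN[OF g] n n'(1)])
      then show "(f \<circ> Y) g - c' g = actN g (n - n') - (n - n')"
        unfolding comp_apply using fY[OF g] n'(2) g by simp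
    qed (rule sg_diff[OF sN n n'(1)])
    then show "c' \<in> H1_map p H N actN f (cohom_rel p H M act `` {Y})"
      unfolding H1_map_def using c' cohom_rel_refl[OF Y] by blast
  qed
qed

lemma coboundary_of_H1_inj:
  assumes inj: "inj_on (H1_map p H N actN f) (H1 p H M act)"
    and Y: "Y \<in> Z1 p H M act" and n: "n \<in> N" and fY: "\<And>g. g \<in> H \<Longrightarrow> f (Y g) = actN g n - n"
  shows "\<exists>m\<in>M. \<forall>g\<in>H. Y g = act g m - m"
proof -
  define zero where "zero = (\<lambda>g::nat \<Rightarrow> int. 0::'m)"
  have act0: "g \<in> H \<Longrightarrow> act g 0 = 0" for g using ad_zero[OF sM aM] .
  have zero: "zero \<in> Z1 p H M act"
    unfolding Z1_def zero_def using sg_zero[OF sM] act0 by auto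
  have f_zero: "f (zero g) = actN g 0 - 0" if "g \<in> H" for g
    using ad_zero[OF sM af] ad_zero[OF sN aN[OF that]] by (simp add: zero_def)
  have H1: "H1 p H M act = Z1 p H M act // cohom_rel p H M act"
    unfolding H1_def cohom_rel_def by simp
  have "H1_map p H N actN f (cohom_rel p H M act `` {Y}) = H1_map p H N actN f (cohom_rel p H M act `` {zero})"
    using H1_map_trivial[OF Y n fY] H1_map_trivial[OF zero sg_zero[OF sN] f_zero] by simp
  then have "cohom_rel p H M act `` {Y} = cohom_rel p H M act `` {zero}"
    using inj quotientI[of Y "Z1 p H M act"] quotientI[of zero "Z1 p H M act"] Y zero
    unfolding H1 by (meson inj_onD)
  then have "Y \<in> cohom_rel p H M act `` {zero}" using cohom_rel_refl[OF Y] by simp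
  then obtain m where m: "m \<in> M" "\<forall>g\<in>H. zero g - Y g = act g m - m"
    unfolding cohom_rel_def cohomologous_def by blast
  show ?thesis
  proof (intro bexI ballI)
    fix g assume g: "g \<in> H"
    show "Y g = act g (- m) - - m"
      using m(2) g ad_neg[OF sM aM[OF g] m(1)] by (simp add: zero_def algebra_simps)
  qed (rule sg_neg[OF sM m(1)])
qed

end

section \<open>Chains of an equivariant coefficient system\<close>

definition edge_act :: "int \<Rightarrow> ((nat \<Rightarrow> int) \<Rightarrow> edge \<Rightarrow> 'a::ab_group_add \<Rightarrow> 'a)
    \<Rightarrow> (nat \<Rightarrow> int) \<Rightarrow> (edge \<Rightarrow> 'a) \<Rightarrow> (edge \<Rightarrow> 'a)" where
  "edge_act p Ae g y = (\<lambda>\<tau>. if \<tau> \<in> edges p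
       then Ae g (eact p (zneg p g) \<tau>) (y (eact p (zneg p g) \<tau>)) else 0)"

locale coeff_system = half_tree +
  fixes Fv :: "vertex \<Rightarrow> 'a::ab_group_add set" and Fe :: "edge \<Rightarrow> 'a set"
    and r :: "edge \<Rightarrow> vertex \<Rightarrow> 'a \<Rightarrow> 'a"
    and Av :: "(nat \<Rightarrow> int) \<Rightarrow> vertex \<Rightarrow> 'a \<Rightarrow> 'a"
    and Ae :: "(nat \<Rightarrow> int) \<Rightarrow> edge \<Rightarrow> 'a \<Rightarrow> 'a"
  assumes coeff: "coeff_sys p Fv Fe r Av Ae"
begin

lemma Fv_sg: "x \<in> verts p \<Longrightarrow> subgrp (Fv x)"
  using coeff by (simp add: coeff_sys_def)
lemma Fe_sg: "\<tau> \<in> edges p \<Longrightarrow> subgrp (Fe \<tau>)"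
  using coeff by (simp add: coeff_sys_def)
lemma r_ad: "\<tau> \<in> edges p \<Longrightarrow> x \<in> \<tau> \<Longrightarrow> additive_on (Fe \<tau>) (r \<tau> x) (Fv x)"
  using coeff by (simp add: coeff_sys_def)
lemma Av_ad: "g \<in> zp p \<Longrightarrow> x \<in> verts p \<Longrightarrow> additive_on (Fv x) (Av g x) (Fv (vact p g x))"
  using coeff by (simp add: coeff_sys_def)
lemma Ae_ad: "g \<in> zp p \<Longrightarrow> \<tau> \<in> edges p \<Longrightarrow> additive_on (Fe \<tau>) (Ae g \<tau>) (Fe (eact p g \<tau>))"
  using coeff by (simp add: coeff_sys_def)
lemma Av_comp: "g \<in> zp p \<Longrightarrow> h \<in> zp p \<Longrightarrow> x \<in> verts p \<Longrightarrow> m \<in> Fv x \<Longrightarrow>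
    Av (zadd p g h) x m = Av g (vact p h x) (Av h x m)"
  using coeff unfolding coeff_sys_def by blast
lemma Ae_comp: "g \<in> zp p \<Longrightarrow> h \<in> zp p \<Longrightarrow> \<tau> \<in> edges p \<Longrightarrow> m \<in> Fe \<tau> \<Longrightarrow>
    Ae (zadd p g h) \<tau> m = Ae g (eact p h \<tau>) (Ae h \<tau> m)"
  using coeff unfolding coeff_sys_def by blast
lemma r_equivariant: "g \<in> zp p \<Longrightarrow> \<tau> \<in> edges p \<Longrightarrow> x \<in> \<tau> \<Longrightarrow> m \<in> Fe \<tau> \<Longrightarrow>
    r (eact p g \<tau>) (vact p g x) (Ae g \<tau> m) = Av g x (r \<tau> x m)"
  using coeff unfolding coeff_sys_def by blast

lemma Ae_mem: "g \<in> zp p \<Longrightarrow> \<tau> \<in> edges p \<Longrightarrow> m \<in> Fe \<tau> \<Longrightarrow> Ae g \<tau> m \<in> Fe (eact p g \<tau>)"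
  using ad_mem[OF Ae_ad] .
lemma r_mem: "\<tau> \<in> edges p \<Longrightarrow> x \<in> \<tau> \<Longrightarrow> m \<in> Fe \<tau> \<Longrightarrow> r \<tau> x m \<in> Fv x"
  using ad_mem[OF r_ad] .
lemma Av_0: "g \<in> zp p \<Longrightarrow> x \<in> verts p \<Longrightarrow> Av g x 0 = 0"
  using ad_zero[OF Fv_sg Av_ad] .
lemma Ae_0: "g \<in> zp p \<Longrightarrow> \<tau> \<in> edges p \<Longrightarrow> Ae g \<tau> 0 = 0"
  using ad_zero[OF Fe_sg Ae_ad] .
lemma r_0: "\<tau> \<in> edges p \<Longrightarrow> x \<in> \<tau> \<Longrightarrow> r \<tau> x 0 = 0"
  using ad_zero[OF Fe_sg r_ad] .

lemma C0_mem: "c \<in> C0 p Fv \<Longrightarrow> x \<in> verts p \<Longrightarrow> c x \<in> Fv x" by (simp add: C0_def)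
lemma C0_out: "c \<in> C0 p Fv \<Longrightarrow> x \<notin> verts p \<Longrightarrow> c x = 0" unfolding C0_def by blast
lemma C0_fin: "c \<in> C0 p Fv \<Longrightarrow> finite {x. c x \<noteq> 0}" by (simp add: C0_def)
lemma C1_mem: "y \<in> C1 p Fe \<Longrightarrow> \<tau> \<in> edges p \<Longrightarrow> y \<tau> \<in> Fe \<tau>" by (simp add: C1_def)
lemma C1_out: "y \<in> C1 p Fe \<Longrightarrow> \<tau> \<notin> edges p \<Longrightarrow> y \<tau> = 0" unfolding C1_def by blast
lemma C1_fin: "y \<in> C1 p Fe \<Longrightarrow> finite {\<tau>. y \<tau> \<noteq> 0}" by (simp add: C1_def)

lemma C0_diff:
  assumes "c \<in> C0 p Fv" "d \<in> C0 p Fv"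
  shows "c - d \<in> C0 p Fv"
proof -
  have "{x. (c - d) x \<noteq> 0} \<subseteq> {x. c x \<noteq> 0} \<union> {x. d x \<noteq> 0}" by auto
  then have "finite {x. (c - d) x \<noteq> 0}" using C0_fin[OF assms(1)] C0_fin[OF assms(2)] finite_subset by blast
  then show ?thesis using assms sg_diff[OF Fv_sg] unfolding C0_def by simp
qed

lemma C1_add:
  assumes "y \<in> C1 p Fe" "z \<in> C1 p Fe"
  shows "y + z \<in> C1 p Fe"
proof -
  have "{\<tau>. (y + z) \<tau> \<noteq> 0} \<subseteq> {\<tau>. y \<tau> \<noteq> 0} \<union> {\<tau>. z \<tau> \<noteq> 0}" by auto
  then have "finite {\<tau>. (y + z) \<tau> \<noteq> 0}" using C1_fin[OF assms(1)] C1_fin[OF assms(2)] finite_subset by blast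
  then show ?thesis using assms sg_add[OF Fe_sg] unfolding C1_def by simp
qed

lemma C1_neg: "y \<in> C1 p Fe \<Longrightarrow> - y \<in> C1 p Fe"
  using sg_neg[OF Fe_sg] unfolding C1_def by simp

lemma C1_diff: "y \<in> C1 p Fe \<Longrightarrow> z \<in> C1 p Fe \<Longrightarrow> y - z \<in> C1 p Fe"
  using C1_add[OF _ C1_neg, of y z] by simp

lemma C1_zero: "0 \<in> C1 p Fe"
  using sg_zero[OF Fe_sg] unfolding C1_def by simp

lemma C1I:
  assumes "finite S" "\<And>\<tau>. y \<tau> \<noteq> 0 \<Longrightarrow> \<tau> \<in> S \<and> \<tau> \<in> edges p" "\<And>\<tau>. \<tau> \<in> edges p \<Longrightarrow> y \<tau> \<in> Fe \<tau>"
  shows "y \<in> C1 p Fe"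
  unfolding C1_def using assms finite_subset[of "{\<tau>. y \<tau> \<noteq> 0}" S] by blast

lemma edge_act_C1:
  assumes g: "g \<in> zp p" and y: "y \<in> C1 p Fe"
  shows "edge_act p Ae g y \<in> C1 p Fe"
proof (rule C1I)
  have g': "zneg p g \<in> zp p" using zneg_zp g .
  show "finite (eact p g ` {\<tau>. y \<tau> \<noteq> 0})" using C1_fin[OF y] by simp
  fix \<tau>
  assume "edge_act p Ae g y \<tau> \<noteq> 0"
  then have \<tau>: "\<tau> \<in> edges p" "Ae g (eact p (zneg p g) \<tau>) (y (eact p (zneg p g) \<tau>)) \<noteq> 0"
    by (auto simp: edge_act_def split: if_splits)
  then have "y (eact p (zneg p g) \<tau>) \<noteq> 0" using Ae_0[OF g eact_edges[OF g' \<tau>(1)]] by metis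
  moreover have "\<tau> = eact p g (eact p (zneg p g) \<tau>)" using eact_neg[OF \<tau>(1)] by simp
  ultimately show "\<tau> \<in> eact p g ` {\<tau>. y \<tau> \<noteq> 0} \<and> \<tau> \<in> edges p" using \<tau>(1) by blast
next
  fix \<tau> assume \<tau>: "\<tau> \<in> edges p"
  have \<sigma>: "eact p (zneg p g) \<tau> \<in> edges p" by (rule eact_edges[OF zneg_zp[OF g] \<tau>])
  show "edge_act p Ae g y \<tau> \<in> Fe \<tau>"
    using Ae_mem[OF g \<sigma> C1_mem[OF y \<sigma>]] \<tau> eact_neg[OF \<tau>] by (simp add: edge_act_def)
qed

lemma chain_act_add:
  assumes g: "g \<in> zp p" and c: "c \<in> C0 p Fv" "d \<in> C0 p Fv"
  shows "chain_act p Av g (c + d) = chain_act p Av g c + chain_act p Av g d"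
  using ad_add[OF Av_ad[OF g vact_verts] C0_mem[OF c(1) vact_verts] C0_mem[OF c(2) vact_verts]]
  by (auto simp: chain_act_def)

lemma chain_act_diff:
  assumes g: "g \<in> zp p" and c: "c \<in> C0 p Fv" "d \<in> C0 p Fv"
  shows "chain_act p Av g (c - d) = chain_act p Av g c - chain_act p Av g d"
  using ad_diff[OF Fv_sg[OF vact_verts] Av_ad[OF g vact_verts] C0_mem[OF c(1) vact_verts] C0_mem[OF c(2) vact_verts]]
  by (auto simp: chain_act_def)

lemma edge_act_add:
  assumes g: "g \<in> zp p" and y: "y \<in> C1 p Fe" "z \<in> C1 p Fe"
  shows "edge_act p Ae g (y + z) = edge_act p Ae g y + edge_act p Ae g z"
proof
  fix \<tau>
  show "edge_act p Ae g (y + z) \<tau> = (edge_act p Ae g y + edge_act p Ae g z) \<tau>"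
  proof (cases "\<tau> \<in> edges p")
    case True
    have "eact p (zneg p g) \<tau> \<in> edges p" by (rule eact_edges[OF zneg_zp[OF g] True])
    then show ?thesis using True ad_add[OF Ae_ad[OF g] C1_mem[OF y(1)] C1_mem[OF y(2)]]
      by (simp add: edge_act_def)
  qed (simp add: edge_act_def)
qed

lemma edge_act_zero: "g \<in> zp p \<Longrightarrow> edge_act p Ae g 0 = 0"
  using Ae_0 eact_edges zneg_zp by (auto simp: edge_act_def)

lemma chain_act_fixed:
  assumes c: "c \<in> C0 p Fv" and g: "g \<in> zp p"
    and fixes_vertex: "\<And>x. c x \<noteq> 0 \<Longrightarrow> vact p (zneg p g) x = x"
    and fixed_value: "\<And>x. c x \<noteq> 0 \<Longrightarrow> Av g x (c x) = c x"
  shows "chain_act p Av g c = c"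
proof
  fix x
  define x' where "x' = vact p (zneg p g) x"
  show "chain_act p Av g c x = c x"
  proof (cases "x \<in> verts p \<and> c x' \<noteq> 0")
    case True
    then have "x' \<in> verts p" using C0_out[OF c] by blast
    then have "vact p g x' = x'" using vact_neg[of x' g] fixes_vertex True by simp
    moreover have "vact p g x' = x" using vact_neg[of x g] True unfolding x'_def by simp
    ultimately have "x' = x" by simp
    then show ?thesis using True fixed_value by (simp add: chain_act_def x'_def)
  next
    case False
    have "c x = 0"
    proof (rule ccontr)
      assume "c x \<noteq> 0"
      then show False using False fixes_vertex C0_out[OF c] unfolding x'_def by metis
    qed
    moreover have "chain_act p Av g c x = 0"
      using False Av_0[OF g vact_verts] by (auto simp: chain_act_def x'_def)
    ultimately show ?thesis by simp
  qed
qed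

lemma chain_act_comp:
  assumes g: "g \<in> zp p" and h: "h \<in> zp p" and c: "c \<in> C0 p Fv"
  shows "chain_act p Av (zadd p g h) c = chain_act p Av g (chain_act p Av h c)"
proof
  fix x
  show "chain_act p Av (zadd p g h) c x = chain_act p Av g (chain_act p Av h c) x"
  proof (cases "x \<in> verts p")
    case True
    define x1 where "x1 = vact p (zneg p g) x"
    define x2 where "x2 = vact p (zneg p h) x1"
    have x1: "x1 \<in> verts p" and x2: "x2 \<in> verts p" unfolding x1_def x2_def by (rule vact_verts)+
    have e: "vact p (zneg p (zadd p g h)) x = x2" unfolding x2_def x1_def by (rule vact_neg_add)
    have "Av (zadd p g h) x2 (c x2) = Av g (vact p h x2) (Av h x2 (c x2))"
      by (rule Av_comp[OF g h x2 C0_mem[OF c x2]])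
    also have "vact p h x2 = x1" unfolding x2_def by (rule vact_neg[OF x1])
    finally show ?thesis using True x1 e by (simp add: chain_act_def x2_def[symmetric] x1_def[symmetric])
  qed (simp add: chain_act_def)
qed

lemma edge_act_comp:
  assumes g: "g \<in> zp p" and h: "h \<in> zp p" and y: "y \<in> C1 p Fe"
  shows "edge_act p Ae (zadd p g h) y = edge_act p Ae g (edge_act p Ae h y)"
proof
  fix \<tau>
  show "edge_act p Ae (zadd p g h) y \<tau> = edge_act p Ae g (edge_act p Ae h y) \<tau>"
  proof (cases "\<tau> \<in> edges p")
    case True
    define \<tau>1 where "\<tau>1 = eact p (zneg p g) \<tau>"
    define \<tau>2 where "\<tau>2 = eact p (zneg p h) \<tau>1"
    have \<tau>1: "\<tau>1 \<in> edges p" unfolding \<tau>1_def by (rule eact_edges[OF zneg_zp[OF g] True])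
    have \<tau>2: "\<tau>2 \<in> edges p" unfolding \<tau>2_def by (rule eact_edges[OF zneg_zp[OF h] \<tau>1])
    have e: "eact p (zneg p (zadd p g h)) \<tau> = \<tau>2" unfolding \<tau>2_def \<tau>1_def by (rule eact_neg_add)
    have "Ae (zadd p g h) \<tau>2 (y \<tau>2) = Ae g (eact p h \<tau>2) (Ae h \<tau>2 (y \<tau>2))"
      by (rule Ae_comp[OF g h \<tau>2 C1_mem[OF y \<tau>2]])
    also have "eact p h \<tau>2 = \<tau>1" unfolding \<tau>2_def by (rule eact_neg[OF \<tau>1])
    finally show ?thesis
      using True \<tau>1 e by (simp add: edge_act_def \<tau>2_def[symmetric] \<tau>1_def[symmetric])
  qed (simp add: edge_act_def)
qed

lemma bdry_app: "bdry p r y x = (\<Sum>\<tau> \<in> edges_at x. r \<tau> x (y \<tau>))"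
  by (simp add: bdry_def)

lemma bdry_support: "bdry p r y x \<noteq> 0 \<Longrightarrow> \<exists>\<tau> \<in> edges_at x. y \<tau> \<noteq> 0"
  unfolding bdry_app using r_0 by (metis (no_types, lifting) CollectD sum.neutral)

lemma bdry_C0:
  assumes y: "y \<in> C1 p Fe"
  shows "bdry p r y \<in> C0 p Fv"
proof -
  have "{x. bdry p r y x \<noteq> 0} \<subseteq> \<Union> {\<tau>. y \<tau> \<noteq> 0}"
    using bdry_support by blast
  moreover have "finite (\<Union> {\<tau>. y \<tau> \<noteq> 0})"
    using C1_fin[OF y] C1_out[OF y] edge_finite by (metis (mono_tags) finite_Union mem_Collect_eq)
  moreover have "bdry p r y x \<in> Fv x" if x: "x \<in> verts p" for x
    unfolding bdry_app by (rule sg_sum[OF Fv_sg[OF x]]) (auto intro!: r_mem C1_mem[OF y])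
  moreover have "bdry p r y x = 0" if "x \<notin> verts p" for x
    using that by (simp add: bdry_app edges_at_outside)
  ultimately show ?thesis unfolding C0_def using finite_subset by blast
qed

lemma bdry_add:
  assumes "y \<in> C1 p Fe" "z \<in> C1 p Fe"
  shows "bdry p r (y + z) = bdry p r y + bdry p r z"
proof
  fix x
  have "r \<tau> x ((y + z) \<tau>) = r \<tau> x (y \<tau>) + r \<tau> x (z \<tau>)" if "\<tau> \<in> edges_at x" for \<tau>
    using ad_add[OF r_ad] C1_mem assms that by simp
  then show "bdry p r (y + z) x = (bdry p r y + bdry p r z) x"
    by (simp add: bdry_app sum.distrib[symmetric])
qed

lemma bdry_diff:
  assumes "y \<in> C1 p Fe" "z \<in> C1 p Fe"
  shows "bdry p r (y - z) = bdry p r y - bdry p r z"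
proof
  fix x
  have "r \<tau> x ((y - z) \<tau>) = r \<tau> x (y \<tau>) - r \<tau> x (z \<tau>)" if "\<tau> \<in> edges_at x" for \<tau>
    using ad_diff[OF Fe_sg r_ad] C1_mem assms that by simp
  then show "bdry p r (y - z) x = (bdry p r y - bdry p r z) x"
    by (simp add: bdry_app sum_subtractf[symmetric])
qed

lemma bdry_zero: "bdry p r 0 = 0"
  using r_0 by (auto simp: bdry_app)

lemma chain_act_bdry:
  assumes g: "g \<in> zp p" and y: "y \<in> C1 p Fe"
  shows "chain_act p Av g (bdry p r y) = bdry p r (edge_act p Ae g y)"
proof
  fix x
  show "chain_act p Av g (bdry p r y) x = bdry p r (edge_act p Ae g y) x"
  proof (cases "x \<in> verts p")
    case False
    then show ?thesis by (simp add: chain_act_def bdry_app edges_at_outside)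
  next
    case x: True
    define x' where "x' = vact p (zneg p g) x"
    have x': "x' \<in> verts p" unfolding x'_def by (rule vact_verts)
    have gx': "vact p g x' = x" unfolding x'_def by (rule vact_neg[OF x])
    have "chain_act p Av g (bdry p r y) x = Av g x' (\<Sum>\<tau> \<in> edges_at x'. r \<tau> x' (y \<tau>))"
      using x by (simp add: chain_act_def bdry_app x'_def)
    also have "\<dots> = (\<Sum>\<tau> \<in> edges_at x'. Av g x' (r \<tau> x' (y \<tau>)))"
      by (rule ad_sum[OF Fv_sg[OF x'] Av_ad[OF g x']]) (auto intro!: r_mem C1_mem[OF y])
    also have "\<dots> = (\<Sum>\<tau> \<in> edges_at x'. r (eact p g \<tau>) x (Ae g \<tau> (y \<tau>)))"
      by (rule sum.cong) (auto simp: r_equivariant[OF g] C1_mem[OF y] gx'[symmetric])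
    also have "\<dots> = (\<Sum>\<tau> \<in> edges_at x'. (\<lambda>\<sigma>. r \<sigma> x (edge_act p Ae g y \<sigma>)) (eact p g \<tau>))"
      by (rule sum.cong) (auto simp: edge_act_def eact_edges[OF g] eact_neg2)
    also have "\<dots> = (\<Sum>\<sigma> \<in> edges_at x. r \<sigma> x (edge_act p Ae g y \<sigma>))"
      by (rule sum.reindex_bij_betw) (use edges_at_bij[OF g x] in \<open>simp add: x'_def\<close>)
    finally show ?thesis by (simp add: bdry_app)
  qed
qed

end

context coeff_system
begin

lemma dsum_mem: "m \<in> dsum_Theta p Fe x \<Longrightarrow> \<tau> \<in> Theta p x \<Longrightarrow> m \<tau> \<in> Fe \<tau>"
  unfolding dsum_Theta_def by blast

lemma dsum_out: "m \<in> dsum_Theta p Fe x \<Longrightarrow> \<tau> \<notin> Theta p x \<Longrightarrow> m \<tau> = 0"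
  unfolding dsum_Theta_def by blast

lemma dsum_C1:
  assumes m: "m \<in> dsum_Theta p Fe x"
  shows "m \<in> C1 p Fe"
proof (rule C1I[OF Theta_finite])
  fix \<tau>
  show "m \<tau> \<noteq> 0 \<Longrightarrow> \<tau> \<in> Theta p x \<and> \<tau> \<in> edges p"
    using dsum_out[OF m, of \<tau>] Theta_edges[of \<tau> x] by auto
  show "\<tau> \<in> edges p \<Longrightarrow> m \<tau> \<in> Fe \<tau>"
    by (cases "\<tau> \<in> Theta p x") (simp_all add: dsum_mem[OF m] dsum_out[OF m] sg_zero[OF Fe_sg])
qed

lemma dsum_sg: "subgrp (dsum_Theta p Fe x)"
  unfolding subgrp_def dsum_Theta_def
  using sg_zero[OF Fe_sg] sg_add[OF Fe_sg] sg_neg[OF Fe_sg] Theta_edges by auto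

lemma dsum_act_ad:
  assumes x: "(k, a) \<in> verts p" and g: "g \<in> stab p (k, a)"
  shows "additive_on (dsum_Theta p Fe (k, a)) (dsum_act p Ae (k, a) g) (dsum_Theta p Fe (k, a))"
proof -
  have gz: "g \<in> zp p" "g k = 0" using g stab_iff[OF x] by auto
  have pulled_back: "\<tau> \<in> Theta p (k, a) \<Longrightarrow> eact p (zneg p g) \<tau> \<in> Theta p (k, a) \<and> eact p (zneg p g) \<tau> \<in> edges p" for \<tau>
    using Theta_act_neg[OF x gz] Theta_edges by blast
  show ?thesis unfolding additive_on_def
  proof (intro conjI ballI)
    fix m assume m: "m \<in> dsum_Theta p Fe (k, a)"
    have "Ae g (eact p (zneg p g) \<tau>) (m (eact p (zneg p g) \<tau>)) \<in> Fe \<tau>" if "\<tau> \<in> Theta p (k, a)" for \<tau>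
      using Ae_mem[OF gz(1), of "eact p (zneg p g) \<tau>"] pulled_back[OF that] dsum_mem[OF m] eact_neg Theta_edges[OF that]
      by simp
    then show "dsum_act p Ae (k, a) g m \<in> dsum_Theta p Fe (k, a)"
      unfolding dsum_Theta_def dsum_act_def by simp
  next
    fix m n assume m: "m \<in> dsum_Theta p Fe (k, a)" and n: "n \<in> dsum_Theta p Fe (k, a)"
    show "dsum_act p Ae (k, a) g (m + n) = dsum_act p Ae (k, a) g m + dsum_act p Ae (k, a) g n"
      using ad_add[OF Ae_ad[OF gz(1)]] pulled_back dsum_mem[OF m] dsum_mem[OF n]
      by (auto simp: dsum_act_def)
  qed
qed

lemma sum_map_ad:
  assumes x: "x \<in> verts p"
  shows "additive_on (dsum_Theta p Fe x) (sum_map p r x) (Fv x)"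
  unfolding additive_on_def
proof (intro conjI ballI)
  fix m assume m: "m \<in> dsum_Theta p Fe x"
  show "sum_map p r x m \<in> Fv x" unfolding sum_map_def
    by (rule sg_sum[OF Fv_sg[OF x]]) (use Theta_edges dsum_mem[OF m] r_mem in blast)
next
  fix m n assume m: "m \<in> dsum_Theta p Fe x" and n: "n \<in> dsum_Theta p Fe x"
  have "r \<tau> x ((m + n) \<tau>) = r \<tau> x (m \<tau>) + r \<tau> x (n \<tau>)" if "\<tau> \<in> Theta p x" for \<tau>
    using ad_add[OF r_ad] dsum_mem[OF m] dsum_mem[OF n] Theta_edges that by simp
  then show "sum_map p r x (m + n) = sum_map p r x m + sum_map p r x n"
    unfolding sum_map_def sum.distrib[symmetric] by (rule sum.cong[OF refl])
qed

lemma sum_map_equivariant: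
  assumes x: "(k, a) \<in> verts p" and g: "g \<in> stab p (k, a)" and m: "m \<in> dsum_Theta p Fe (k, a)"
  shows "sum_map p r (k, a) (dsum_act p Ae (k, a) g m) = Av g (k, a) (sum_map p r (k, a) m)"
proof -
  let ?x = "(k, a)"
  have gz: "g \<in> zp p" "g k = 0" using g stab_iff[OF x] by auto
  have gx: "vact p g ?x = ?x" using g unfolding stab_def by auto
  have "Av g ?x (sum_map p r ?x m) = (\<Sum>\<tau>\<in>Theta p ?x. Av g ?x (r \<tau> ?x (m \<tau>)))"
    unfolding sum_map_def
    by (rule ad_sum[OF Fv_sg[OF x] Av_ad[OF gz(1) x]]) (use Theta_edges dsum_mem[OF m] r_mem in blast)
  also have "\<dots> = (\<Sum>\<tau>\<in>Theta p ?x. r (eact p g \<tau>) ?x (Ae g \<tau> (m \<tau>)))"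
    using r_equivariant[OF gz(1)] Theta_edges dsum_mem[OF m] gx
    by (intro sum.cong[OF refl]) (metis (no_types, lifting) CollectD)
  also have "\<dots> = (\<Sum>\<tau>\<in>Theta p ?x. (\<lambda>\<sigma>. r \<sigma> ?x (dsum_act p Ae ?x g m \<sigma>)) (eact p g \<tau>))"
    using Theta_act[OF x gz] eact_neg2 Theta_edges
    by (intro sum.cong[OF refl]) (simp add: dsum_act_def)
  also have "\<dots> = (\<Sum>\<sigma>\<in>Theta p ?x. r \<sigma> ?x (dsum_act p Ae ?x g m \<sigma>))"
    by (rule sum.reindex_bij_betw[OF Theta_bij[OF x gz]])
  finally show ?thesis unfolding sum_map_def by simp
qed

text \<open>The hypothesis of the theorem concerns exactly this equivariant map.\<close>
lemma local_equivariant_hom: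
  assumes x: "(k, a) \<in> verts p"
  shows "equivariant_hom (stab p (k, a)) (dsum_Theta p Fe (k, a)) (dsum_act p Ae (k, a))
           (Fv (k, a)) (\<lambda>g. Av g (k, a)) (sum_map p r (k, a))"
proof
  fix g assume g: "g \<in> stab p (k, a)"
  then show "additive_on (dsum_Theta p Fe (k, a)) (dsum_act p Ae (k, a) g) (dsum_Theta p Fe (k, a))"
    by (rule dsum_act_ad[OF x])
  show "additive_on (Fv (k, a)) (Av g (k, a)) (Fv (k, a))"
    using g Av_ad[OF _ x, of g] unfolding stab_def by auto
  fix m assume "m \<in> dsum_Theta p Fe (k, a)"
  then show "sum_map p r (k, a) (dsum_act p Ae (k, a) g m) = Av g (k, a) (sum_map p r (k, a) m)"
    by (rule sum_map_equivariant[OF x g])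
qed (use dsum_sg Fv_sg[OF x] sum_map_ad[OF x] in auto)

lemma edge_act_dsum:
  assumes x: "(k, a) \<in> verts p" and g: "g \<in> zp p" "g k = 0" and m: "m \<in> dsum_Theta p Fe (k, a)"
  shows "edge_act p Ae g m = dsum_act p Ae (k, a) g m"
proof
  fix \<tau>
  show "edge_act p Ae g m \<tau> = dsum_act p Ae (k, a) g m \<tau>"
  proof (cases "\<tau> \<in> edges p \<and> \<tau> \<notin> Theta p (k, a)")
    case True
    have "eact p (zneg p g) \<tau> \<notin> Theta p (k, a)"
      using Theta_act[OF x g, of "eact p (zneg p g) \<tau>"] True eact_neg by auto
    then show ?thesis
      using True dsum_out[OF m] Ae_0[OF g(1) eact_edges[OF zneg_zp[OF g(1)]]]
      by (simp add: edge_act_def dsum_act_def)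
  qed (use Theta_edges in \<open>auto simp: edge_act_def dsum_act_def\<close>)
qed

end

section \<open>Injectivity of the boundary map\<close>

locale tree_system = coeff_system +
  assumes smooth: "smooth_sys p Fv Fe Av Ae"
    and r_inj: "\<forall>\<tau> \<in> edges p. \<forall>x \<in> \<tau>. inj_on (r \<tau> x) (Fe \<tau>)"
begin

text \<open>If y vanishes on all edges above level M but not on ed M b, then \<partial>y does not vanish
  at the upper vertex (M + 1, b): the only other edges there lie above level M.\<close>
lemma bdry_at_top_edge:
  assumes y: "y \<in> C1 p Fe" and above: "\<And>n b. M < n \<Longrightarrow> y (ed p n b) = 0"
    and b: "y (ed p M b) \<noteq> 0"
  shows "(Suc M, b) \<in> verts p" "bdry p r y (Suc M, b) \<noteq> 0"
proof -
  let ?v = "(Suc M, b)" and ?\<tau> = "ed p M b"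
  have te: "?\<tau> \<in> edges p" using b C1_out[OF y] by blast
  then show v: "?v \<in> verts p" using ed_edge_range by (simp add: verts_def del: power_Suc)
  have vin: "?v \<in> ?\<tau>" by (simp add: ed_def)
  have others: "r \<sigma> ?v (y \<sigma>) = 0" if \<sigma>: "\<sigma> \<in> edges_at ?v - {?\<tau>}" for \<sigma>
  proof -
    obtain n b' where \<sigma>_eq: "\<sigma> = ed p n b'" using \<sigma> edges_ed by blast
    then have "Suc M = n \<or> (Suc M = Suc n \<and> b = b')" using \<sigma> by (auto simp: ed_def)
    then have "M < n" using \<sigma> \<sigma>_eq by auto
    then show ?thesis using above \<sigma> \<sigma>_eq r_0 by auto
  qed
  have "bdry p r y ?v = r ?\<tau> ?v (y ?\<tau>) + (\<Sum>\<sigma> \<in> edges_at ?v - {?\<tau>}. r \<sigma> ?v (y \<sigma>))"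
    unfolding bdry_app using te vin finite_edges_at[of ?v] by (simp add: sum.remove)
  also have "\<dots> = r ?\<tau> ?v (y ?\<tau>)" using others by simp
  also have "\<dots> \<noteq> r ?\<tau> ?v 0"
    using b r_inj te vin C1_mem[OF y te] sg_zero[OF Fe_sg[OF te]] by (meson inj_onD)
  finally show "bdry p r y ?v \<noteq> 0" using r_0[OF te vin] by simp
qed

lemma bdry_vanishing_above:
  assumes y: "y \<in> C1 p Fe" and van: "\<And>v. v \<in> verts p \<Longrightarrow> N < fst v \<Longrightarrow> bdry p r y v = 0"
    and "N \<le> n"
  shows "y (ed p n b) = 0"
proof (rule ccontr)
  assume nz: "y (ed p n b) \<noteq> 0"
  define S where "S = {n. \<exists>b. y (ed p n b) \<noteq> 0}"
  have "S \<subseteq> (\<lambda>\<tau>. Min (fst ` \<tau>)) ` {\<tau>. y \<tau> \<noteq> 0}"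
  proof
    fix n assume "n \<in> S"
    then obtain b where "y (ed p n b) \<noteq> 0" unfolding S_def by blast
    then show "n \<in> (\<lambda>\<tau>. Min (fst ` \<tau>)) ` {\<tau>. y \<tau> \<noteq> 0}"
      using ed_min_level[of p n b] by (metis (mono_tags) image_eqI mem_Collect_eq)
  qed
  then have finS: "finite S" using C1_fin[OF y] finite_surj by blast
  have nS: "n \<in> S" using nz unfolding S_def by blast
  define M where "M = Max S"
  have "M \<in> S" unfolding M_def using finS nS by (intro Max_in) auto
  then obtain b' where b': "y (ed p M b') \<noteq> 0" unfolding S_def by blast
  have above: "y (ed p m b'') = 0" if "M < m" for m b''
    using finS that unfolding M_def S_def by (metis (mono_tags, lifting) Max_ge leD mem_Collect_eq)
  have "n \<le> M" unfolding M_def using finS nS by (rule Max_ge)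
  then show False
    using bdry_at_top_edge[OF y above b'] van \<open>N \<le> n\<close> by simp
qed

lemma bdry_inj:
  assumes y: "y \<in> C1 p Fe" and z: "z \<in> C1 p Fe" and eq: "bdry p r y = bdry p r z"
  shows "y = z"
proof
  fix \<tau>
  have d: "y - z \<in> C1 p Fe" and bd: "bdry p r (y - z) = 0"
    using C1_diff[OF y z] bdry_diff[OF y z] eq by simp_all
  show "y \<tau> = z \<tau>"
  proof (cases "\<tau> \<in> edges p")
    case True
    then obtain n b where "\<tau> = ed p n b" using edges_ed by blast
    then have "(y - z) \<tau> = 0" using bdry_vanishing_above[OF d, of 0 n b] bd by simp
    then show ?thesis by simp
  qed (simp add: C1_out[OF y] C1_out[OF z])
qed

section \<open>The cocycle attached to an N_0-invariant class in H_0\<close>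

definition class_invariant :: "(vertex \<Rightarrow> 'a) \<Rightarrow> bool" where
  "class_invariant c \<longleftrightarrow> (\<forall>g\<in>zp p. \<exists>y\<in>C1 p Fe. chain_act p Av g c = c + bdry p r y)"

text \<open>By injectivity of \<partial> the 1-chain Y_c(g) with g c = c + \<partial>Y_c(g) is unique.\<close>
definition cocycle :: "(vertex \<Rightarrow> 'a) \<Rightarrow> (nat \<Rightarrow> int) \<Rightarrow> edge \<Rightarrow> 'a" where
  "cocycle c g = (THE y. y \<in> C1 p Fe \<and> chain_act p Av g c = c + bdry p r y)"

lemma cocycle_eq:
  assumes "y \<in> C1 p Fe" "chain_act p Av g c = c + bdry p r y"
  shows "cocycle c g = y"
  unfolding cocycle_def
proof (rule the_equality)
  fix y' assume "y' \<in> C1 p Fe \<and> chain_act p Av g c = c + bdry p r y'"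
  then show "y' = y" using bdry_inj assms by (metis add_left_cancel)
qed (use assms in blast)

lemma cocycle_prop:
  assumes "class_invariant c" "g \<in> zp p"
  shows "cocycle c g \<in> C1 p Fe" "chain_act p Av g c = c + bdry p r (cocycle c g)"
proof -
  obtain y where "y \<in> C1 p Fe" "chain_act p Av g c = c + bdry p r y"
    using assms unfolding class_invariant_def by blast
  then show "cocycle c g \<in> C1 p Fe" "chain_act p Av g c = c + bdry p r (cocycle c g)"
    using cocycle_eq by auto
qed

lemma cocycle_add:
  assumes c: "c \<in> C0 p Fv" "class_invariant c" and g: "g \<in> zp p" and h: "h \<in> zp p"
  shows "cocycle c (zadd p g h) = cocycle c g + edge_act p Ae g (cocycle c h)"
proof (rule cocycle_eq)
  note Yg = cocycle_prop[OF c(2) g] and Yh = cocycle_prop[OF c(2) h]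
  show "cocycle c g + edge_act p Ae g (cocycle c h) \<in> C1 p Fe"
    using C1_add Yg(1) edge_act_C1[OF g Yh(1)] by blast
  have "chain_act p Av (zadd p g h) c = chain_act p Av g (c + bdry p r (cocycle c h))"
    using chain_act_comp[OF g h c(1)] Yh(2) by simp
  also have "\<dots> = c + bdry p r (cocycle c g) + bdry p r (edge_act p Ae g (cocycle c h))"
    using chain_act_add[OF g c(1) bdry_C0[OF Yh(1)]] Yg(2) chain_act_bdry[OF g Yh(1)] by simp
  also have "\<dots> = c + bdry p r (cocycle c g + edge_act p Ae g (cocycle c h))"
    using bdry_add[OF Yg(1) edge_act_C1[OF g Yh(1)]] by (simp add: add.assoc)
  finally show "chain_act p Av (zadd p g h) c = c + bdry p r (cocycle c g + edge_act p Ae g (cocycle c h))" .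
qed

text \<open>Smoothness: a 0-chain is fixed by p^K Z_p for K large (beyond the levels and the
  smoothness indices of its finitely many nonzero values).\<close>
lemma chain_smooth:
  assumes c: "c \<in> C0 p Fv"
  shows "\<exists>K. \<forall>g\<in>zp p. g K = 0 \<longrightarrow> chain_act p Av g c = c"
proof -
  define S where "S = {x. c x \<noteq> 0}"
  have finS: "finite S" unfolding S_def by (rule C0_fin[OF c])
  have Sv: "x \<in> S \<Longrightarrow> x \<in> verts p" for x unfolding S_def using C0_out[OF c] by blast
  have "\<forall>x\<in>S. \<exists>k. \<forall>g\<in>zp p. g k = 0 \<longrightarrow> Av g x (c x) = c x"
    using smooth Sv C0_mem[OF c] unfolding smooth_sys_def by blast
  then obtain kf where kf: "\<forall>x\<in>S. \<forall>g\<in>zp p. g (kf x) = 0 \<longrightarrow> Av g x (c x) = c x" by metis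
  define K where "K = Max (insert 0 ((\<lambda>x. max (fst x) (kf x)) ` S))"
  have K: "fst x \<le> K \<and> kf x \<le> K" if "x \<in> S" for x
  proof -
    have "max (fst x) (kf x) \<le> K" unfolding K_def using finS that by (intro Max_ge) auto
    then show ?thesis by simp
  qed
  show ?thesis
  proof (intro exI ballI impI chain_act_fixed[OF c])
    fix g x assume g: "g \<in> zp p" and gK: "g K = 0" and "c x \<noteq> 0"
    then have x: "x \<in> S" unfolding S_def by simp
    have "g (fst x) = 0" using zp_zero_below[OF g gK] K[OF x] by blast
    then have "zneg p g (fst x) = 0" by (simp add: zneg_def)
    then show "vact p (zneg p g) x = x"
      by (rule vact_fix_iff[OF Sv[OF x] zneg_zp[OF g], THEN iffD2])
    show "Av g x (c x) = c x" using kf x g zp_zero_below[OF g gK] K[OF x] by blast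
  qed
qed

lemma cocycle_locally_constant:
  assumes c: "c \<in> C0 p Fv" "class_invariant c"
  shows "\<exists>K. \<forall>g\<in>zp p. \<forall>h\<in>zp p. g K = h K \<longrightarrow> cocycle c g = cocycle c h"
proof -
  obtain K where K: "\<forall>g\<in>zp p. g K = 0 \<longrightarrow> chain_act p Av g c = c" using chain_smooth[OF c(1)] by blast
  have Y0: "cocycle c g = 0" if "g \<in> zp p" "g K = 0" for g
    using K that by (intro cocycle_eq C1_zero) (simp add: bdry_zero)
  show ?thesis
  proof (intro exI ballI impI)
    fix g h assume g: "g \<in> zp p" and h: "h \<in> zp p" and e: "g K = h K"
    define d where "d = zadd p (zneg p g) h"
    have d: "d \<in> zp p" unfolding d_def by (rule zadd_zp[OF zneg_zp[OF g] h])
    have "d K = ((- g K) mod p ^ K + h K) mod p ^ K" by (simp add: d_def zadd_def zneg_def)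
    also have "\<dots> = 0" using e by (simp add: mod_add_left_eq)
    finally have dK: "d K = 0" .
    have "cocycle c h = cocycle c g + edge_act p Ae g (cocycle c d)"
      using cocycle_add[OF c g d] zadd_cancel[OF h] unfolding d_def by simp
    then show "cocycle c g = cocycle c h" using Y0[OF d dK] edge_act_zero[OF g] by simp
  qed
qed

end

section \<open>Normalising the cocycle level by level\<close>

context tree_system
begin

definition vanish_below :: "nat \<Rightarrow> (edge \<Rightarrow> 'a) \<Rightarrow> bool" where
  "vanish_below k y \<longleftrightarrow> (\<forall>n b. n < k \<longrightarrow> y (ed p n b) = 0)"

definition invariant_below :: "nat \<Rightarrow> (vertex \<Rightarrow> 'a) \<Rightarrow> bool" where
  "invariant_below k c \<longleftrightarrow>
     (\<forall>g\<in>zp p. \<exists>y\<in>C1 p Fe. chain_act p Av g c = c + bdry p r y \<and> vanish_below k y)"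

lemma invariant_below_class: "invariant_below k c \<Longrightarrow> class_invariant c"
  unfolding invariant_below_def class_invariant_def by blast

lemma invariant_below_cocycle:
  assumes "invariant_below k c" "g \<in> zp p"
  shows "vanish_below k (cocycle c g)"
  using assms cocycle_eq unfolding invariant_below_def by blast

definition local_cocycle :: "(vertex \<Rightarrow> 'a) \<Rightarrow> nat \<Rightarrow> (nat \<Rightarrow> int) \<Rightarrow> edge \<Rightarrow> 'a" where
  "local_cocycle c k g = (\<lambda>\<tau>. if \<tau> \<in> Theta p (k, 0) then cocycle c g \<tau> else 0)"

lemma local_cocycle_dsum:
  assumes "class_invariant c" "g \<in> zp p"
  shows "local_cocycle c k g \<in> dsum_Theta p Fe (k, 0)"
  unfolding local_cocycle_def dsum_Theta_def
  using C1_mem[OF cocycle_prop(1)[OF assms]] Theta_edges by auto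

lemma local_cocycle_Z1:
  assumes c: "c \<in> C0 p Fv" "class_invariant c"
  shows "local_cocycle c k \<in> Z1 p (stab p (k, 0)) (dsum_Theta p Fe (k, 0)) (dsum_act p Ae (k, 0))"
  unfolding Z1_def
proof (intro CollectI conjI ballI)
  have stab: "g \<in> zp p \<and> g k = 0" if "g \<in> stab p (k, 0)" for g
    using that stab_iff[OF base_vertex] by simp
  fix g assume g: "g \<in> stab p (k, 0)"
  show "local_cocycle c k g \<in> dsum_Theta p Fe (k, 0)"
    using local_cocycle_dsum[OF c(2)] stab[OF g] by blast
  fix h assume h: "h \<in> stab p (k, 0)"
  have "cocycle c (zadd p g h) \<tau> = cocycle c g \<tau> + edge_act p Ae g (cocycle c h) \<tau>" for \<tau>
    using cocycle_add[OF c] stab g h by simp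
  then show "local_cocycle c k (zadd p g h) = local_cocycle c k g + dsum_act p Ae (k, 0) g (local_cocycle c k h)"
    using Theta_act_neg[OF base_vertex] stab[OF g] Theta_edges
    by (auto simp: local_cocycle_def dsum_act_def edge_act_def)
next
  obtain K where K: "\<forall>g\<in>zp p. \<forall>h\<in>zp p. g K = h K \<longrightarrow> cocycle c g = cocycle c h"
    using cocycle_locally_constant[OF c] by blast
  show "\<exists>K. \<forall>g\<in>stab p (k, 0). \<forall>h\<in>stab p (k, 0). g K = h K \<longrightarrow> local_cocycle c k g = local_cocycle c k h"
  proof (intro exI ballI impI)
    fix g h assume "g \<in> stab p (k, 0)" "h \<in> stab p (k, 0)" "g K = h K"
    then have eq: "cocycle c g = cocycle c h" using K unfolding stab_def by blast
    show "local_cocycle c k g = local_cocycle c k h" unfolding local_cocycle_def eq ..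
  qed
qed

text \<open>The image of the local cocycle in F(w_k) is the coboundary of c(w_k): the edges at
  w_k outside \<Theta>(w_k) lie below level k, where Y_c vanishes.\<close>
lemma local_cocycle_image:
  assumes c: "invariant_below k c" and g: "g \<in> stab p (k, 0)"
  shows "sum_map p r (k, 0) (local_cocycle c k g) = Av g (k, 0) (c (k, 0)) - c (k, 0)"
proof -
  let ?w = "(k, 0::int)"
  have gz: "g \<in> zp p" "g k = 0" using g stab_iff[OF base_vertex] by auto
  have "vact p (zneg p g) ?w = ?w"
    using vact_fix_iff[OF base_vertex zneg_zp[OF gz(1)]] gz(2) by (simp add: zneg_def)
  then have "chain_act p Av g c ?w = Av g ?w (c ?w)"
    using base_vertex by (simp add: chain_act_def)
  then have "Av g ?w (c ?w) - c ?w = (\<Sum>\<tau>\<in>edges_at ?w. r \<tau> ?w (cocycle c g \<tau>))"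
    using cocycle_prop(2)[OF invariant_below_class[OF c] gz(1)] by (simp add: bdry_app algebra_simps)
  also have "\<dots> = (\<Sum>\<tau>\<in>Theta p ?w. r \<tau> ?w (cocycle c g \<tau>))"
  proof (rule sum.mono_neutral_right[OF finite_edges_at])
    show "Theta p ?w \<subseteq> edges_at ?w" using Theta_edges by blast
    show "\<forall>\<tau>\<in>edges_at ?w - Theta p ?w. r \<tau> ?w (cocycle c g \<tau>) = 0"
    proof
      fix \<tau> assume t: "\<tau> \<in> edges_at ?w - Theta p ?w"
      then obtain n b where nb: "\<tau> = ed p n b" using edges_ed by blast
      then have "n < k" using edges_at_base_not_Theta t by blast
      then have "cocycle c g \<tau> = 0"
        using invariant_below_cocycle[OF c gz(1)] nb unfolding vanish_below_def by blast
      then show "r \<tau> ?w (cocycle c g \<tau>) = 0" using r_0 t by simp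
    qed
  qed
  also have "\<dots> = sum_map p r ?w (local_cocycle c k g)"
    unfolding sum_map_def local_cocycle_def by simp
  finally show ?thesis by simp
qed

lemma local_cocycle_coboundary:
  assumes inj: "inj_on (H1_map p (stab p (k, 0)) (Fv (k, 0)) (\<lambda>g. Av g (k, 0)) (sum_map p r (k, 0)))
           (H1 p (stab p (k, 0)) (dsum_Theta p Fe (k, 0)) (dsum_act p Ae (k, 0)))"
    and c: "c \<in> C0 p Fv" "invariant_below k c"
  shows "\<exists>m\<in>dsum_Theta p Fe (k, 0). \<forall>h\<in>stab p (k, 0).
           local_cocycle c k h = dsum_act p Ae (k, 0) h m - m"
proof -
  interpret equivariant_hom "stab p (k, 0)" "dsum_Theta p Fe (k, 0)" "dsum_act p Ae (k, 0)"
      "Fv (k, 0)" "\<lambda>g. Av g (k, 0)" "sum_map p r (k, 0)"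
    by (rule local_equivariant_hom[OF base_vertex])
  show ?thesis
    using coboundary_of_H1_inj[OF inj local_cocycle_Z1[OF c(1) invariant_below_class[OF c(2)]]
        C0_mem[OF c(1) base_vertex]] local_cocycle_image[OF c(2)]
    by blast
qed

text \<open>Given m with local_cocycle c k h = h m - m on the stabiliser of w_k, transport m to all
  vertices of level k along the translations t_b: on the edge ed k b we put
  z(ed k b) = (t_b m)(ed k b) - Y_c(t_b)(ed k b).  Subtracting \<partial>z from c kills Y_c at level k.\<close>
definition level_correction :: "(vertex \<Rightarrow> 'a) \<Rightarrow> nat \<Rightarrow> (edge \<Rightarrow> 'a) \<Rightarrow> edge \<Rightarrow> 'a" where
  "level_correction c k m \<tau> =
     (if \<tau> \<in> edges p \<and> (\<exists>b. \<tau> = ed p k b)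
      then edge_act p Ae (translation (SOME b. \<tau> = ed p k b)) m \<tau>
             - cocycle c (translation (SOME b. \<tau> = ed p k b)) \<tau>
      else 0)"

lemma level_correction_at:
  assumes "ed p k b \<in> edges p"
  shows "level_correction c k m (ed p k b) =
           edge_act p Ae (translation b) m (ed p k b) - cocycle c (translation b) (ed p k b)"
proof -
  have "(SOME b'. ed p k b = ed p k b') = b"
    by (rule some_equality) (auto dest: ed_inj)
  then show ?thesis using assms unfolding level_correction_def by auto
qed

lemma level_correction_support:
  "level_correction c k m \<tau> \<noteq> 0 \<Longrightarrow> \<tau> \<in> edges p \<and> (\<exists>b. \<tau> = ed p k b)"
  unfolding level_correction_def by (auto split: if_splits)

lemma level_correction_C1:
  assumes c: "class_invariant c" and m: "m \<in> C1 p Fe"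
  shows "level_correction c k m \<in> C1 p Fe"
proof (rule C1I[OF finite_edges_upto[of "Suc k"]])
  fix \<tau>
  assume "level_correction c k m \<tau> \<noteq> 0"
  then show "\<tau> \<in> {\<tau> \<in> edges p. \<forall>x\<in>\<tau>. fst x \<le> Suc k} \<and> \<tau> \<in> edges p"
    using level_correction_support ed_level by fastforce
next
  fix \<tau> assume \<tau>: "\<tau> \<in> edges p"
  have "edge_act p Ae (translation b) m \<tau> - cocycle c (translation b) \<tau> \<in> Fe \<tau>" for b
    using sg_diff[OF Fe_sg[OF \<tau>]] C1_mem[OF edge_act_C1[OF translation_zp m] \<tau>]
      C1_mem[OF cocycle_prop(1)[OF c translation_zp] \<tau>] by blast
  then show "level_correction c k m \<tau> \<in> Fe \<tau>"
    unfolding level_correction_def using sg_zero[OF Fe_sg[OF \<tau>]] by auto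
qed

lemma edge_act_level_correction:
  assumes c: "class_invariant c" and m: "m \<in> C1 p Fe" and g: "g \<in> zp p"
    and te: "ed p k b \<in> edges p" and preimage: "eact p (zneg p g) (ed p k b) = ed p k b'"
  shows "edge_act p Ae g (level_correction c k m) (ed p k b) =
           edge_act p Ae (zadd p g (translation b')) m (ed p k b)
           - edge_act p Ae g (cocycle c (translation b')) (ed p k b)"
proof -
  let ?\<sigma> = "ed p k b'" and ?T = "translation b'"
  have s: "?\<sigma> \<in> edges p" using eact_edges[OF zneg_zp[OF g] te] preimage by simp
  have "edge_act p Ae g (level_correction c k m) (ed p k b)
      = Ae g ?\<sigma> (edge_act p Ae ?T m ?\<sigma> - cocycle c ?T ?\<sigma>)"
    using te s preimage by (simp add: edge_act_def level_correction_at)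
  also have "\<dots> = Ae g ?\<sigma> (edge_act p Ae ?T m ?\<sigma>) - Ae g ?\<sigma> (cocycle c ?T ?\<sigma>)"
    by (rule ad_diff[OF Fe_sg[OF s] Ae_ad[OF g s] C1_mem[OF edge_act_C1[OF translation_zp m] s]
          C1_mem[OF cocycle_prop(1)[OF c translation_zp] s]])
  also have "\<dots> = edge_act p Ae g (edge_act p Ae ?T m) (ed p k b) - edge_act p Ae g (cocycle c ?T) (ed p k b)"
    using te preimage by (simp add: edge_act_def)
  finally show ?thesis by (simp add: edge_act_comp[OF g translation_zp m])
qed

lemma level_correction_coboundary:
  assumes c: "c \<in> C0 p Fv" "class_invariant c" and m: "m \<in> dsum_Theta p Fe (k, 0)"
    and loc: "\<forall>h\<in>stab p (k, 0). local_cocycle c k h = dsum_act p Ae (k, 0) h m - m"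
    and g: "g \<in> zp p" and te: "ed p k b \<in> edges p"
  shows "edge_act p Ae g (level_correction c k m) (ed p k b) - level_correction c k m (ed p k b)
           = cocycle c g (ed p k b)"
proof -
  let ?\<tau> = "ed p k b" and ?Y = "cocycle c" and ?t = "translation b"
  obtain b' where preimage: "eact p (zneg p g) ?\<tau> = ed p k b'"
    using eact_ed[OF zneg_zp[OF g]] by blast
  let ?t' = "translation b'"
  define h where "h = zadd p (zneg p ?t) (zadd p g ?t')"
  have mC: "m \<in> C1 p Fe" by (rule dsum_C1[OF m])
  have h: "h \<in> stab p (k, 0)"
    unfolding h_def using translation_conj_stab[OF g] preimage eact_neg[OF te] by metis
  then have hz: "h \<in> zp p" "h k = 0" using stab_iff[OF base_vertex] by auto
  have th: "zadd p ?t h = zadd p g ?t'"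
    unfolding h_def by (rule zadd_cancel[OF zadd_zp[OF g translation_zp]])
  have "edge_act p Ae (zadd p g ?t') m = edge_act p Ae ?t (dsum_act p Ae (k, 0) h m)"
    unfolding th[symmetric] using edge_act_comp[OF translation_zp hz(1) mC, of b]
      edge_act_dsum[OF base_vertex hz m] by simp
  also have "dsum_act p Ae (k, 0) h m = local_cocycle c k h + m" using loc h by simp
  also have "edge_act p Ae ?t (local_cocycle c k h + m) = edge_act p Ae ?t (local_cocycle c k h) + edge_act p Ae ?t m"
    by (rule edge_act_add[OF translation_zp dsum_C1[OF local_cocycle_dsum[OF c(2) hz(1)]] mC])
  finally have "edge_act p Ae (zadd p g ?t') m ?\<tau> = edge_act p Ae ?t (?Y h) ?\<tau> + edge_act p Ae ?t m ?\<tau>"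
    using te translation_back_Theta[OF te] by (simp add: edge_act_def local_cocycle_def)
  then have "edge_act p Ae g (level_correction c k m) ?\<tau> - level_correction c k m ?\<tau>
      = edge_act p Ae ?t (?Y h) ?\<tau> + ?Y ?t ?\<tau> - edge_act p Ae g (?Y ?t') ?\<tau>"
    using edge_act_level_correction[OF c(2) mC g te preimage] level_correction_at[OF te, where c = c and m = m]
    by (simp add: algebra_simps)
  also have "\<dots> = ?Y g ?\<tau>"
  proof -
    have "?Y g ?\<tau> + edge_act p Ae g (?Y ?t') ?\<tau> = ?Y (zadd p g ?t') ?\<tau>"
      using cocycle_add[OF c g translation_zp[of b']] by simp
    also have "\<dots> = ?Y (zadd p ?t h) ?\<tau>" by (simp only: th)
    also have "\<dots> = ?Y ?t ?\<tau> + edge_act p Ae ?t (?Y h) ?\<tau>"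
      using cocycle_add[OF c translation_zp[of b] hz(1)] by simp
    finally have "?Y g ?\<tau> + edge_act p Ae g (?Y ?t') ?\<tau> = ?Y ?t ?\<tau> + edge_act p Ae ?t (?Y h) ?\<tau>" .
    then show ?thesis by (simp add: diff_eq_eq add.commute)
  qed
  finally show ?thesis .
qed

lemma level_correction_normalises:
  assumes c: "c \<in> C0 p Fv" "invariant_below k c" and m: "m \<in> dsum_Theta p Fe (k, 0)"
    and loc: "\<forall>h\<in>stab p (k, 0). local_cocycle c k h = dsum_act p Ae (k, 0) h m - m"
    and g: "g \<in> zp p"
  shows "vanish_below (Suc k) (cocycle c g - (edge_act p Ae g (level_correction c k m) - level_correction c k m))"
  unfolding vanish_below_def
proof (intro allI impI)
  fix n b assume n: "n < Suc k"
  let ?z = "level_correction c k m"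
  have ci: "class_invariant c" by (rule invariant_below_class[OF c(2)])
  show "(cocycle c g - (edge_act p Ae g ?z - ?z)) (ed p n b) = 0"
  proof (cases "ed p n b \<in> edges p")
    case False
    then show ?thesis by (simp add: edge_act_def level_correction_def
          C1_out[OF cocycle_prop(1)[OF ci g]])
  next
    case te: True
    show ?thesis
    proof (cases "n = k")
      case True
      then show ?thesis using level_correction_coboundary[OF c(1) ci m loc g] te by simp
    next
      case False
      then have nk: "n < k" using n by simp
      have z0: "?z (ed p n b') = 0" for b' using level_correction_support ed_inj nk by blast
      have "eact p (zneg p g) (ed p n b) = ed p n ((b + zneg p g (Suc n)) mod p ^ Suc n)"
        by (rule eact_ed[OF zneg_zp[OF g]])
      then have "edge_act p Ae g ?z (ed p n b) = 0"
        using te z0 Ae_0[OF g eact_edges[OF zneg_zp[OF g] te]] by (simp add: edge_act_def)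
      moreover have "cocycle c g (ed p n b) = 0"
        using invariant_below_cocycle[OF c(2) g] nk unfolding vanish_below_def by blast
      ultimately show ?thesis using z0 by simp
    qed
  qed
qed

definition supported_upto :: "nat \<Rightarrow> (vertex \<Rightarrow> 'a) \<Rightarrow> bool" where
  "supported_upto N c \<longleftrightarrow> (\<forall>x. c x \<noteq> 0 \<longrightarrow> fst x \<le> N)"

lemma normalise_level:
  assumes inj: "inj_on (H1_map p (stab p (k, 0)) (Fv (k, 0)) (\<lambda>g. Av g (k, 0)) (sum_map p r (k, 0)))
           (H1 p (stab p (k, 0)) (dsum_Theta p Fe (k, 0)) (dsum_act p Ae (k, 0)))"
    and c: "c \<in> C0 p Fv" "supported_upto N c" "invariant_below k c" and kN: "k < N"
  shows "\<exists>z\<in>C1 p Fe. c - bdry p r z \<in> C0 p Fv \<and> supported_upto N (c - bdry p r z)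
           \<and> invariant_below (Suc k) (c - bdry p r z)"
proof -
  obtain m where m: "m \<in> dsum_Theta p Fe (k, 0)"
    and loc: "\<forall>h\<in>stab p (k, 0). local_cocycle c k h = dsum_act p Ae (k, 0) h m - m"
    using local_cocycle_coboundary[OF inj c(1,3)] by blast
  have ci: "class_invariant c" by (rule invariant_below_class[OF c(3)])
  define z where "z = level_correction c k m"
  have zC: "z \<in> C1 p Fe" unfolding z_def by (rule level_correction_C1[OF ci dsum_C1[OF m]])
  have "fst x \<le> N" if nz: "bdry p r z x \<noteq> 0" for x
  proof -
    obtain \<tau> where "x \<in> \<tau>" "z \<tau> \<noteq> 0" using bdry_support[OF nz] by blast
    then obtain b where "x \<in> ed p k b" using level_correction_support unfolding z_def by blast
    then show "fst x \<le> N" using ed_level kN by fastforce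
  qed
  then have supp: "supported_upto N (c - bdry p r z)"
    using c(2) unfolding supported_upto_def by (metis diff_0_right diff_self minus_apply)
  have "invariant_below (Suc k) (c - bdry p r z)"
    unfolding invariant_below_def
  proof
    fix g assume g: "g \<in> zp p"
    define y where "y = cocycle c g - (edge_act p Ae g z - z)"
    have YC: "cocycle c g \<in> C1 p Fe" by (rule cocycle_prop(1)[OF ci g])
    have gzC: "edge_act p Ae g z \<in> C1 p Fe" by (rule edge_act_C1[OF g zC])
    have "chain_act p Av g (c - bdry p r z) = (c + bdry p r (cocycle c g)) - bdry p r (edge_act p Ae g z)"
      using chain_act_diff[OF g c(1) bdry_C0[OF zC]] cocycle_prop(2)[OF ci g] chain_act_bdry[OF g zC]
      by simp
    also have "\<dots> = (c - bdry p r z) + bdry p r y"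
      unfolding y_def bdry_diff[OF YC C1_diff[OF gzC zC]] bdry_diff[OF gzC zC] by (simp add: algebra_simps)
    finally show "\<exists>y\<in>C1 p Fe. chain_act p Av g (c - bdry p r z) = c - bdry p r z + bdry p r y
        \<and> vanish_below (Suc k) y"
      using C1_diff[OF YC C1_diff[OF gzC zC]] level_correction_normalises[OF c(1,3) m loc g]
      unfolding y_def z_def by blast
  qed
  then show ?thesis using zC C0_diff[OF c(1) bdry_C0[OF zC]] supp by blast
qed

text \<open>At the top level N the cocycle vanishes identically, since its boundary vanishes above
  level N; hence c itself is N_0-invariant.\<close>
lemma invariant_at_support_level:
  assumes c: "c \<in> C0 p Fv" "supported_upto N c" "invariant_below N c"
  shows "c \<in> C0_inv p Fv Av"
proof -
  have "chain_act p Av g c = c" if g: "g \<in> zp p" for g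
  proof -
    obtain y where y: "y \<in> C1 p Fe" "chain_act p Av g c = c + bdry p r y" "vanish_below N y"
      using c(3) g unfolding invariant_below_def by blast
    have "bdry p r y v = 0" if v: "v \<in> verts p" "N < fst v" for v
    proof -
      have "c v = 0" "c (vact p (zneg p g) v) = 0"
        using c(2) v(2) unfolding supported_upto_def by (auto simp: not_le[symmetric])
      then show ?thesis
        using fun_cong[OF y(2), of v] v(1) Av_0[OF g vact_verts] by (simp add: chain_act_def)
    qed
    then have "y \<tau> = 0" for \<tau>
      using bdry_vanishing_above[OF y(1)] y(3) C1_out[OF y(1)] edges_ed not_le
      unfolding vanish_below_def by metis
    then have "y = 0" by auto
    then show ?thesis using y(2) bdry_zero by simp
  qed
  then show ?thesis using c(1) unfolding C0_inv_def by blast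
qed

lemma normalise_all_levels:
  assumes inj: "\<forall>x \<in> verts p. inj_on
           (H1_map p (stab p x) (Fv x) (\<lambda>g. Av g x) (sum_map p r x))
           (H1 p (stab p x) (dsum_Theta p Fe x) (dsum_act p Ae x))"
    and "k \<le> N" "c \<in> C0 p Fv" "supported_upto N c" "invariant_below k c"
  shows "\<exists>z\<in>C1 p Fe. c - bdry p r z \<in> C0_inv p Fv Av"
  using assms(2-)
proof (induction "N - k" arbitrary: k c)
  case 0
  then have "k = N" by simp
  then have "c \<in> C0_inv p Fv Av" using invariant_at_support_level 0 by blast
  then show ?case using C1_zero bdry_zero by force
next
  case (Suc d)
  have kN: "k < N" using Suc.hyps(2) by simp
  obtain z where z: "z \<in> C1 p Fe" "c - bdry p r z \<in> C0 p Fv"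
    "supported_upto N (c - bdry p r z)" "invariant_below (Suc k) (c - bdry p r z)"
    using normalise_level[OF _ Suc.prems(2-4) kN] inj base_vertex by blast
  have "d = N - Suc k" "Suc k \<le> N" using Suc.hyps(2) by simp_all
  then obtain z' where z': "z' \<in> C1 p Fe" "c - bdry p r z - bdry p r z' \<in> C0_inv p Fv Av"
    using Suc.hyps(1) z(2-4) by blast
  have "c - bdry p r z - bdry p r z' = c - bdry p r (z + z')"
    using bdry_add[OF z(1) z'(1)] by (simp add: algebra_simps)
  then show ?case using z'(2) C1_add[OF z(1) z'(1)] by metis
qed

lemma H0_class_bdry:
  assumes z: "z \<in> C1 p Fe"
  shows "H0_class p Fv Fe r (c - bdry p r z) = H0_class p Fv Fe r c"
proof -
  have "c - bdry p r z + bdry p r y = c + bdry p r (y - z)"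
    and "c + bdry p r y = c - bdry p r z + bdry p r (y + z)" if "y \<in> C1 p Fe" for y
    using bdry_diff[OF that z] bdry_add[OF that z] by (simp_all add: algebra_simps)
  then show ?thesis
    unfolding H0_class_def using C1_diff[OF _ z] C1_add[OF _ z] by blast
qed

theorem invariant_classes_lift:
  assumes inj: "\<forall>x \<in> verts p. inj_on
           (H1_map p (stab p x) (Fv x) (\<lambda>g. Av g x) (sum_map p r x))
           (H1 p (stab p x) (dsum_Theta p Fe x) (dsum_act p Ae x))"
  shows "H0_class p Fv Fe r ` C0_inv p Fv Av = H0_inv p Fv Fe r Av"
proof
  show "H0_class p Fv Fe r ` C0_inv p Fv Av \<subseteq> H0_inv p Fv Fe r Av"
    unfolding H0_inv_def C0_inv_def by auto
next
  show "H0_inv p Fv Fe r Av \<subseteq> H0_class p Fv Fe r ` C0_inv p Fv Av"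
  proof
    fix X assume "X \<in> H0_inv p Fv Fe r Av"
    then obtain c where c: "c \<in> C0 p Fv" and X: "X = H0_class p Fv Fe r c"
      and inv: "\<forall>g\<in>zp p. H0_class p Fv Fe r (chain_act p Av g c) = H0_class p Fv Fe r c"
      unfolding H0_inv_def by blast
    have "invariant_below 0 c"
      unfolding invariant_below_def vanish_below_def
    proof
      fix g assume g: "g \<in> zp p"
      have "chain_act p Av g c \<in> H0_class p Fv Fe r (chain_act p Av g c)"
        unfolding H0_class_def using C1_zero bdry_zero by force
      then show "\<exists>y\<in>C1 p Fe. chain_act p Av g c = c + bdry p r y \<and> (\<forall>n b. n < 0 \<longrightarrow> y (ed p n b) = 0)"
        using inv g unfolding H0_class_def by auto
    qed
    moreover have "supported_upto (Max (insert 0 (fst ` {x. c x \<noteq> 0}))) c"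
      unfolding supported_upto_def using C0_fin[OF c] by (auto intro: Max_ge)
    ultimately obtain z where z: "z \<in> C1 p Fe" "c - bdry p r z \<in> C0_inv p Fv Av"
      using normalise_all_levels[OF inj _ c] by blast
    then show "X \<in> H0_class p Fv Fe r ` C0_inv p Fv Av"
      using X H0_class_bdry[OF z(1)] by (metis image_eqI)
  qed
qed

end

theorem lemma4:
  fixes p :: int
    and Fv :: "vertex \<Rightarrow> 'a::ab_group_add set" and Fe :: "edge \<Rightarrow> 'a set"
    and r :: "edge \<Rightarrow> vertex \<Rightarrow> 'a \<Rightarrow> 'a"
    and Av :: "(nat \<Rightarrow> int) \<Rightarrow> vertex \<Rightarrow> 'a \<Rightarrow> 'a"
    and Ae :: "(nat \<Rightarrow> int) \<Rightarrow> edge \<Rightarrow> 'a \<Rightarrow> 'a"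
  assumes "prime p"
    and "coeff_sys p Fv Fe r Av Ae"
    and "smooth_sys p Fv Fe Av Ae"
    and "\<forall>\<tau> \<in> edges p. \<forall>x \<in> \<tau>. inj_on (r \<tau> x) (Fe \<tau>)"
    and "\<forall>x \<in> verts p. inj_on
           (H1_map p (stab p x) (Fv x) (\<lambda>g. Av g x) (sum_map p r x))
           (H1 p (stab p x) (dsum_Theta p Fe x) (dsum_act p Ae x))"
  shows "H0_class p Fv Fe r ` C0_inv p Fv Av = H0_inv p Fv Fe r Av"
proof -
  interpret tree_system p Fv Fe r Av Ae
    using assms(1-4) prime_gt_1_int by unfold_locales auto
  show ?thesis by (rule invariant_classes_lift[OF assms(5)])
qed

end
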